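(* Let $\Bbbk$ be a field of characteristic $0$, $B=\bigoplus_{s=1}^K\Bbbk e_s$, and let $(A,\{\!\{-,-\}\!\})$ be a double quasi-Poisson algebra over $B$. For $\alpha\in\mathbb N^K$, the algebra $R=\mathcal O(\operatorname{Rep}(A,\alpha))$ is a quasi-Poisson algebra over the pair $(\operatorname{GL}_\alpha,\mathfrak g_\alpha)$ for the antisymmetric biderivation $\{-,-\}$ on $R$ determined by $\{a_{ij},b_{kl}\}=\{\!\{a,b\}\!\}'_{kj}\{\!\{a,b\}\!\}''_{il}$ for $a,b\in A$.
   Context: $\otimes=\otimes_\Bbbk$; Sweedler notation. A $B$-linear double bracket is a $\Bbbk$-bilinear map $A\times A\to A\otimes A$ vanishing when an argument lies in $B$, with $\{\!\{a,b\}\!\}=-\{\!\{b,a\}\!\}''\otimes\{\!\{b,a\}\!\}'$ and $\{\!\{a,bc\}\!\}=\{\!\{a,b\}\!\}c+b\{\!\{a,c\}\!\}$ ($x(d'\otimes d'')y=xd'\otimes d''y$). Triple bracket: $\{\!\{a,b,c\}\!\}=\{\!\{a,\{\!\{b,c\}\!\}'\}\!\}\otimes\{\!\{b,c\}\!\}''+\tau\{\!\{b,\{\!\{c,a\}\!\}'\}\!\}\otimes\{\!\{c,a\}\!\}''+\tau^2\{\!\{c,\{\!\{a,b\}\!\}'\}\!\}\otimes\{\!\{a,b\}\!\}''$, $\tau(x_1\otimes x_2\otimes x_3)=x_3\otimes x_1\otimes x_2$. Quasi-Poisson: $\{\!\{a,b,c\}\!\}=\frac14\sum_s(ce_sa\otimes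 e_sb\otimes e_s-ce_sa\otimes e_s\otimes be_s-ce_s\otimes ae_sb\otimes e_s+ce_s\otimes ae_s\otimes be_s-e_sa\otimes e_sb\otimes e_sc+e_sa\otimes e_s\otimes be_sc+e_s\otimes ae_sb\otimes e_sc-e_s\otimes ae_s\otimes be_sc)$. $N=\sum_s\alpha_s$; $R$ is the commutative $\Bbbk$-algebra generated by $a_{ij}$ ($a\in A$, $1\le i,j\le N$) with $(a+b)_{ij}=a_{ij}+b_{ij}$, $(ab)_{ij}=\sum_ka_{ik}b_{kj}$, and $\mathcal X(e_s)=((e_s)_{ij})$ the $s$-th diagonal identity block of size $\alpha_s$; $\mathcal X(a)=(a_{ij})$. $\operatorname{GL}_\alpha=\prod_s\operatorname{GL}_{\alpha_s}(\Bbbk)$ acts by $g.\mathcal X(a)=g^{-1}\mathcal X(a)g$; $\mathfrak g_\alpha=\prod_s\mathfrak{gl}_{\alpha_s}(\Bbbk)$ acts by derivations $\eta_R(\mathcal X(a))=[\mathcal X(a),\eta]$, carries the trace pairing $(\eta_1|\eta_2)=\operatorname{tr}(\eta_1\eta_2)$ and the adjoint action of $\operatorname{GL}_\alpha$. Quasi-Poisson algebra: given a Lie algebra $\mathfrak g$ with nondegenerate invariant symmetric form $(-|-)$, dual bases $(\varepsilon_i),(\varepsilon^i)$, Cartan trivector $\phi=\frac1{12}\sum_{i,j,k}(\varepsilon^i|[\varepsilon^j,\varepsilon^k])\varepsilon_i\wedge\varepsilon_j\wedge\varepsilon_k$, acting on a commutative algebra $R$ by derivations $\eta\mapsto\eta_R$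 (Lie homomorphism), and a group $G$ acting on $\mathfrak g$ by Lie automorphisms $\eta\mapsto{}^g\eta$ and on $R$ by algebra automorphisms with $({}^g\eta)_Ra=g.\eta_R(g^{-1}.a)$: $R$ is a quasi-Poisson algebra over $(G,\mathfrak g)$ if it has an antisymmetric biderivation $\{-,-\}$ with $\eta_R\{a,b\}=\{\eta_Ra,b\}+\{a,\eta_Rb\}$, $\{a,\{b,c\}\}+\{b,\{c,a\}\}+\{c,\{a,b\}\}=\frac12\phi_R(a,b,c)$ where $(\eta^1\otimes\eta^2\otimes\eta^3)_R(a,b,c)=\eta^1_R(a)\eta^2_R(b)\eta^3_R(c)$ extended linearly, $g.\{a,b\}=\{g.a,g.b\}$, and ${}^g\phi=\phi$, for all $g\in G,\eta\in\mathfrak g,a,b,c\in R$. *)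

theory Defs
  imports Main "HOL-Library.Poly_Mapping"
begin

text \<open>An element of A (x) A (resp. A (x) A (x) A), tensor product over the field 'k, is
represented by a finite list of simple tensors (x,y) (resp. (x,y,z)); scalars are absorbed
into the first factor.  Two such lists represent the same tensor iff the difference of the
associated formal linear combinations lies in the k-span of the multilinearity relations;
this is the literal construction of the tensor product as a quotient of the free vector space.\<close>

definition fsum :: "'b list \<Rightarrow> ('b \<Rightarrow>\<^sub>0 'k::field)" where
  "fsum L = sum_list (map (\<lambda>t. Poly_Mapping.single t 1) L)"

inductive_set kspan :: "('b \<Rightarrow>\<^sub>0 'k::field) set \<Rightarrow> ('b \<Rightarrow>\<^sub>0 'k) set" for S where
  kspan_zero: "0 \<in> kspan S"
| kspan_step: "s \<in> S \<Longrightarrow> p \<in> kspan S \<Longrightarrow> Poly_Mapping.map ((*) c) s + p \<in> kspan S"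

definition Rel2 :: "('k::field \<Rightarrow> 'a::ring \<Rightarrow> 'a) \<Rightarrow> ('a \<times> 'a \<Rightarrow>\<^sub>0 'k) set" where
  "Rel2 sm =
     {Poly_Mapping.single (x + x', y) 1 - Poly_Mapping.single (x, y) 1 - Poly_Mapping.single (x', y) 1 | x x' y. True}
   \<union> {Poly_Mapping.single (x, y + y') 1 - Poly_Mapping.single (x, y) 1 - Poly_Mapping.single (x, y') 1 | x y y'. True}
   \<union> {Poly_Mapping.single (sm c x, y) 1 - Poly_Mapping.single (x, y) c | c x y. True}
   \<union> {Poly_Mapping.single (x, sm c y) 1 - Poly_Mapping.single (x, y) c | c x y. True}"

definition Rel3 :: "('k::field \<Rightarrow> 'a::ring \<Rightarrow> 'a) \<Rightarrow> ('a \<times> 'a \<times> 'a \<Rightarrow>\<^sub>0 'k) set" where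
  "Rel3 sm =
     {Poly_Mapping.single (x + x', y, z) 1 - Poly_Mapping.single (x, y, z) 1 - Poly_Mapping.single (x', y, z) 1 | x x' y z. True}
   \<union> {Poly_Mapping.single (x, y + y', z) 1 - Poly_Mapping.single (x, y, z) 1 - Poly_Mapping.single (x, y', z) 1 | x y y' z. True}
   \<union> {Poly_Mapping.single (x, y, z + z') 1 - Poly_Mapping.single (x, y, z) 1 - Poly_Mapping.single (x, y, z') 1 | x y z z'. True}
   \<union> {Poly_Mapping.single (sm c x, y, z) 1 - Poly_Mapping.single (x, y, z) c | c x y z. True}
   \<union> {Poly_Mapping.single (x, sm c y, z) 1 - Poly_Mapping.single (x, y, z) c | c x y z. True}
   \<union> {Poly_Mapping.single (x, y, sm c z) 1 - Poly_Mapping.single (x, y, z) c | c x y z. True}"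

definition teq2 :: "('k::field \<Rightarrow> 'a::ring \<Rightarrow> 'a) \<Rightarrow> ('a \<times> 'a) list \<Rightarrow> ('a \<times> 'a) list \<Rightarrow> bool" where
  "teq2 sm L M \<longleftrightarrow> fsum L - fsum M \<in> kspan (Rel2 sm)"

definition teq3 :: "('k::field \<Rightarrow> 'a::ring \<Rightarrow> 'a) \<Rightarrow> ('a \<times> 'a \<times> 'a) list \<Rightarrow> ('a \<times> 'a \<times> 'a) list \<Rightarrow> bool" where
  "teq3 sm L M \<longleftrightarrow> fsum L - fsum M \<in> kspan (Rel3 sm)"

text \<open>sm is the k-vector space structure on the (not necessarily unital as a type class) ring A,
making A an associative k-algebra; e 0, ..., e (K-1) are orthogonal idempotents whose sum is the
unit of A (this is the structure map B -> A of the B-algebra A).\<close>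
definition kalgebra :: "('k::field \<Rightarrow> 'a::ring \<Rightarrow> 'a) \<Rightarrow> bool" where
  "kalgebra sm \<longleftrightarrow>
     (\<forall>c x y. sm c (x + y) = sm c x + sm c y) \<and>
     (\<forall>c d x. sm (c + d) x = sm c x + sm d x) \<and>
     (\<forall>c d x. sm (c * d) x = sm c (sm d x)) \<and>
     (\<forall>x. sm 1 x = x) \<and>
     (\<forall>c x y. sm c (x * y) = sm c x * y \<and> sm c (x * y) = x * sm c y)"

definition Balgebra :: "('k::field \<Rightarrow> 'a::ring \<Rightarrow> 'a) \<Rightarrow> nat \<Rightarrow> (nat \<Rightarrow> 'a) \<Rightarrow> bool" where
  "Balgebra sm K e \<longleftrightarrow> kalgebra sm \<and>
     (\<forall>s<K. \<forall>t<K. e s * e t = (if s = t then e s else 0)) \<and>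
     (\<forall>x. (\<Sum>s<K. e s) * x = x \<and> x * (\<Sum>s<K. e s) = x)"

definition inB :: "('k::field \<Rightarrow> 'a::ring \<Rightarrow> 'a) \<Rightarrow> nat \<Rightarrow> (nat \<Rightarrow> 'a) \<Rightarrow> 'a \<Rightarrow> bool" where
  "inB sm K e b \<longleftrightarrow> (\<exists>c. b = (\<Sum>s<K. sm (c s) (e s)))"

definition double_bracket ::
  "('k::field \<Rightarrow> 'a::ring \<Rightarrow> 'a) \<Rightarrow> nat \<Rightarrow> (nat \<Rightarrow> 'a) \<Rightarrow> ('a \<Rightarrow> 'a \<Rightarrow> ('a \<times> 'a) list) \<Rightarrow> bool" where
  "double_bracket sm K e dbr \<longleftrightarrow>
     (\<forall>x x' y. teq2 sm (dbr (x + x') y) (dbr x y @ dbr x' y)) \<and>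
     (\<forall>x y y'. teq2 sm (dbr x (y + y')) (dbr x y @ dbr x y')) \<and>
     (\<forall>c x y. teq2 sm (dbr (sm c x) y) (map (\<lambda>(u, v). (sm c u, v)) (dbr x y))) \<and>
     (\<forall>c x y. teq2 sm (dbr x (sm c y)) (map (\<lambda>(u, v). (sm c u, v)) (dbr x y))) \<and>
     (\<forall>b x. inB sm K e b \<longrightarrow> teq2 sm (dbr b x) [] \<and> teq2 sm (dbr x b) []) \<and>
     (\<forall>a b. teq2 sm (dbr a b) (map (\<lambda>(u, v). (sm (-1) v, u)) (dbr b a))) \<and>
     (\<forall>a b c. teq2 sm (dbr a (b * c))
                 (map (\<lambda>(u, v). (u, v * c)) (dbr a b) @ map (\<lambda>(u, v). (b * u, v)) (dbr a c)))"

text \<open>{{a, d'}} (x) d'' for d = the tensor represented by L\<close>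
definition dbr_out :: "('a \<Rightarrow> 'a \<Rightarrow> ('a \<times> 'a) list) \<Rightarrow> 'a \<Rightarrow> ('a \<times> 'a) list \<Rightarrow> ('a \<times> 'a \<times> 'a) list" where
  "dbr_out dbr a L = concat (map (\<lambda>(u, v). map (\<lambda>(x, y). (x, y, v)) (dbr a u)) L)"

definition tau3 :: "'a \<times> 'a \<times> 'a \<Rightarrow> 'a \<times> 'a \<times> 'a" where
  "tau3 t = (case t of (x1, x2, x3) \<Rightarrow> (x3, x1, x2))"

definition triple_bracket :: "('a \<Rightarrow> 'a \<Rightarrow> ('a \<times> 'a) list) \<Rightarrow> 'a \<Rightarrow> 'a \<Rightarrow> 'a \<Rightarrow> ('a \<times> 'a \<times> 'a) list" where
  "triple_bracket dbr a b c =
     dbr_out dbr a (dbr b c) @ map tau3 (dbr_out dbr b (dbr c a)) @ map (tau3 \<circ> tau3) (dbr_out dbr c (dbr a b))"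

definition qP_rhs :: "('k::field \<Rightarrow> 'a::ring \<Rightarrow> 'a) \<Rightarrow> nat \<Rightarrow> (nat \<Rightarrow> 'a) \<Rightarrow> 'a \<Rightarrow> 'a \<Rightarrow> 'a \<Rightarrow> ('a \<times> 'a \<times> 'a) list" where
  "qP_rhs sm K e a b c = concat (map (\<lambda>s. let es = e s; p = sm (1/4); m = sm (-(1/4)) in
     [ (p (c * es * a), es * b, es),
       (m (c * es * a), es, b * es),
       (m (c * es), a * es * b, es),
       (p (c * es), a * es, b * es),
       (m (es * a), es * b, es * c),
       (p (es * a), es, b * es * c),
       (p es, a * es * b, es * c),
       (m es, a * es, b * es * c) ]) [0..<K])"

definition double_quasi_Poisson ::
  "('k::field \<Rightarrow> 'a::ring \<Rightarrow> 'a) \<Rightarrow> nat \<Rightarrow> (nat \<Rightarrow> 'a) \<Rightarrow> ('a \<Rightarrow> 'a \<Rightarrow> ('a \<times> 'a) list) \<Rightarrow> bool" where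
  "double_quasi_Poisson sm K e dbr \<longleftrightarrow> Balgebra sm K e \<and> double_bracket sm K e dbr \<and>
     (\<forall>a b c. teq3 sm (triple_bracket dbr a b c) (qP_rhs sm K e a b c))"

text \<open>Polynomials over 'k in the commuting variables a_ij (a in A, i, j natural numbers);
indices are 0-based: 0 <= i, j < N.  R is the quotient of this polynomial ring by the ideal
Irel generated by the defining relations; elements of R are represented by polynomials and
equality in R is congruence modulo Irel.\<close>

type_synonym ('a, 'k) rpoly = "(('a \<times> nat \<times> nat) \<Rightarrow>\<^sub>0 nat) \<Rightarrow>\<^sub>0 'k"

definition Xv :: "'a \<Rightarrow> nat \<Rightarrow> nat \<Rightarrow> ('a, 'k::field) rpoly" where
  "Xv a i j = Poly_Mapping.single (Poly_Mapping.single (a, i, j) 1) 1"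

definition cst :: "'k::field \<Rightarrow> ('a, 'k) rpoly" where
  "cst c = Poly_Mapping.single 0 c"

definition dimN :: "nat \<Rightarrow> (nat \<Rightarrow> nat) \<Rightarrow> nat" where
  "dimN K \<alpha> = (\<Sum>s<K. \<alpha> s)"

definition inblock :: "(nat \<Rightarrow> nat) \<Rightarrow> nat \<Rightarrow> nat \<Rightarrow> bool" where
  "inblock \<alpha> s i \<longleftrightarrow> (\<Sum>t<s. \<alpha> t) \<le> i \<and> i < (\<Sum>t<s. \<alpha> t) + \<alpha> s"

definition sameblock :: "nat \<Rightarrow> (nat \<Rightarrow> nat) \<Rightarrow> nat \<Rightarrow> nat \<Rightarrow> bool" where
  "sameblock K \<alpha> i j \<longleftrightarrow> (\<exists>s<K. inblock \<alpha> s i \<and> inblock \<alpha> s j)"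

text \<open>entries of X(e_s): the s-th diagonal identity block\<close>
definition eblk :: "(nat \<Rightarrow> nat) \<Rightarrow> nat \<Rightarrow> nat \<Rightarrow> nat \<Rightarrow> 'k::field" where
  "eblk \<alpha> s i j = (if i = j \<and> inblock \<alpha> s i then 1 else 0)"

inductive_set igen :: "'r::comm_ring_1 set \<Rightarrow> 'r set" for G where
  igen_zero: "0 \<in> igen G"
| igen_step: "g \<in> G \<Longrightarrow> p \<in> igen G \<Longrightarrow> r * g + p \<in> igen G"

definition Rrels :: "('k::field \<Rightarrow> 'a::ring \<Rightarrow> 'a) \<Rightarrow> nat \<Rightarrow> (nat \<Rightarrow> 'a) \<Rightarrow> (nat \<Rightarrow> nat) \<Rightarrow> ('a, 'k) rpoly set" where
  "Rrels sm K e \<alpha> = (let N = dimN K \<alpha> in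
       {Xv (x + y) i j - Xv x i j - Xv y i j | x y i j. i < N \<and> j < N}
     \<union> {Xv (sm c x) i j - cst c * Xv x i j | c x i j. i < N \<and> j < N}
     \<union> {Xv (x * y) i j - (\<Sum>k<N. Xv x i k * Xv y k j) | x y i j. i < N \<and> j < N}
     \<union> {Xv (e s) i j - cst (eblk \<alpha> s i j) | s i j. s < K \<and> i < N \<and> j < N}
     \<union> {Xv x i j | x i j. \<not> (i < N \<and> j < N)})"

definition Irel :: "('k::field \<Rightarrow> 'a::ring \<Rightarrow> 'a) \<Rightarrow> nat \<Rightarrow> (nat \<Rightarrow> 'a) \<Rightarrow> (nat \<Rightarrow> nat) \<Rightarrow> ('a, 'k) rpoly set" where
  "Irel sm K e \<alpha> = igen (Rrels sm K e \<alpha>)"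

definition req :: "('k::field \<Rightarrow> 'a::ring \<Rightarrow> 'a) \<Rightarrow> nat \<Rightarrow> (nat \<Rightarrow> 'a) \<Rightarrow> (nat \<Rightarrow> nat)
                   \<Rightarrow> ('a, 'k) rpoly \<Rightarrow> ('a, 'k) rpoly \<Rightarrow> bool" where
  "req sm K e \<alpha> p q \<longleftrightarrow> p - q \<in> Irel sm K e \<alpha>"

definition pder :: "('v \<Rightarrow> (('v \<Rightarrow>\<^sub>0 nat) \<Rightarrow>\<^sub>0 'k::field)) \<Rightarrow> (('v \<Rightarrow>\<^sub>0 nat) \<Rightarrow>\<^sub>0 'k) \<Rightarrow> (('v \<Rightarrow>\<^sub>0 nat) \<Rightarrow>\<^sub>0 'k)" where
  "pder d p = (\<Sum>m\<in>Poly_Mapping.keys p. Poly_Mapping.single 0 (Poly_Mapping.lookup p m) *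
       (\<Sum>v\<in>Poly_Mapping.keys m. of_nat (Poly_Mapping.lookup m v) *
          Poly_Mapping.single ((m::'v \<Rightarrow>\<^sub>0 nat) - Poly_Mapping.single (v::'v) (1::nat)) (1::'k) * d v))"

definition psubst :: "('v \<Rightarrow> (('v \<Rightarrow>\<^sub>0 nat) \<Rightarrow>\<^sub>0 'k::field)) \<Rightarrow> (('v \<Rightarrow>\<^sub>0 nat) \<Rightarrow>\<^sub>0 'k) \<Rightarrow> (('v \<Rightarrow>\<^sub>0 nat) \<Rightarrow>\<^sub>0 'k)" where
  "psubst s p = (\<Sum>m\<in>Poly_Mapping.keys p. Poly_Mapping.single 0 (Poly_Mapping.lookup p m) * (\<Prod>v\<in>Poly_Mapping.keys m. s v ^ Poly_Mapping.lookup m v))"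

text \<open>N x N matrices over k are functions nat => nat => k; elements of g_alpha are the block
diagonal ones (vanishing outside the N x N range).\<close>
definition in_galpha :: "nat \<Rightarrow> (nat \<Rightarrow> nat) \<Rightarrow> (nat \<Rightarrow> nat \<Rightarrow> 'k::field) \<Rightarrow> bool" where
  "in_galpha K \<alpha> \<eta> \<longleftrightarrow> (\<forall>i j. \<eta> i j \<noteq> 0 \<longrightarrow> i < dimN K \<alpha> \<and> j < dimN K \<alpha> \<and> sameblock K \<alpha> i j)"

definition mmul :: "nat \<Rightarrow> (nat \<Rightarrow> nat \<Rightarrow> 'k::field) \<Rightarrow> (nat \<Rightarrow> nat \<Rightarrow> 'k) \<Rightarrow> (nat \<Rightarrow> nat \<Rightarrow> 'k)" where
  "mmul N x y = (\<lambda>i j. \<Sum>k<N. x i k * y k j)"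

definition idm :: "nat \<Rightarrow> nat \<Rightarrow> nat \<Rightarrow> 'k::field" where
  "idm N i j = (if i = j \<and> i < N then 1 else 0)"

definition in_GLalpha :: "nat \<Rightarrow> (nat \<Rightarrow> nat) \<Rightarrow> (nat \<Rightarrow> nat \<Rightarrow> 'k::field) \<Rightarrow> (nat \<Rightarrow> nat \<Rightarrow> 'k) \<Rightarrow> bool" where
  "in_GLalpha K \<alpha> g h \<longleftrightarrow> in_galpha K \<alpha> g \<and> in_galpha K \<alpha> h \<and>
     mmul (dimN K \<alpha>) g h = idm (dimN K \<alpha>) \<and> mmul (dimN K \<alpha>) h g = idm (dimN K \<alpha>)"

definition etaR :: "nat \<Rightarrow> (nat \<Rightarrow> nat) \<Rightarrow> (nat \<Rightarrow> nat \<Rightarrow> 'k::field) \<Rightarrow> ('a, 'k) rpoly \<Rightarrow> ('a, 'k) rpoly" where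
  "etaR K \<alpha> \<eta> = pder (\<lambda>(a, i, j). let N = dimN K \<alpha> in
      if i < N \<and> j < N then (\<Sum>k<N. Xv a i k * cst (\<eta> k j) - cst (\<eta> i k) * Xv a k j) else 0)"

definition gactR :: "nat \<Rightarrow> (nat \<Rightarrow> nat) \<Rightarrow> (nat \<Rightarrow> nat \<Rightarrow> 'k::field) \<Rightarrow> (nat \<Rightarrow> nat \<Rightarrow> 'k) \<Rightarrow> ('a, 'k) rpoly \<Rightarrow> ('a, 'k) rpoly" where
  "gactR K \<alpha> g h = psubst (\<lambda>(a, i, j). let N = dimN K \<alpha> in
      if i < N \<and> j < N then (\<Sum>k<N. \<Sum>l<N. cst (h i k) * Xv a k l * cst (g l j)) else Xv a i j)"

text \<open>Cartan trivector, using the dual bases eps_(i,j) = E_ij, eps^(i,j) = E_ji of g_alpha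
for the trace pairing, and x /\ y /\ z = sum over permutations of sign * tensor.\<close>
definition Emat :: "nat \<Rightarrow> nat \<Rightarrow> nat \<Rightarrow> nat \<Rightarrow> 'k::field" where
  "Emat i j = (\<lambda>r c. if r = i \<and> c = j then 1 else 0)"

definition gbasis :: "nat \<Rightarrow> (nat \<Rightarrow> nat) \<Rightarrow> (nat \<times> nat) set" where
  "gbasis K \<alpha> = {(i, j). i < dimN K \<alpha> \<and> j < dimN K \<alpha> \<and> sameblock K \<alpha> i j}"

definition trpair :: "nat \<Rightarrow> (nat \<Rightarrow> nat \<Rightarrow> 'k::field) \<Rightarrow> (nat \<Rightarrow> nat \<Rightarrow> 'k) \<Rightarrow> 'k" where
  "trpair N x y = (\<Sum>r<N. \<Sum>c<N. x r c * y c r)"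

definition mbr :: "nat \<Rightarrow> (nat \<Rightarrow> nat \<Rightarrow> 'k::field) \<Rightarrow> (nat \<Rightarrow> nat \<Rightarrow> 'k) \<Rightarrow> (nat \<Rightarrow> nat \<Rightarrow> 'k)" where
  "mbr N x y = (\<lambda>i j. mmul N x y i j - mmul N y x i j)"

definition cartan_coef :: "nat \<Rightarrow> (nat \<Rightarrow> nat) \<Rightarrow> nat \<times> nat \<Rightarrow> nat \<times> nat \<Rightarrow> nat \<times> nat \<Rightarrow> 'k::field" where
  "cartan_coef K \<alpha> u v w = trpair (dimN K \<alpha>) (Emat (snd u) (fst u))
      (mbr (dimN K \<alpha>) (Emat (snd v) (fst v)) (Emat (snd w) (fst w)))"

definition wedge3 :: "('m \<Rightarrow> 'm \<Rightarrow> 'm \<Rightarrow> 'r::ab_group_add) \<Rightarrow> 'm \<Rightarrow> 'm \<Rightarrow> 'm \<Rightarrow> 'r" where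
  "wedge3 F x y z = F x y z - F y x z - F x z y - F z y x + F y z x + F z x y"

text \<open>phi evaluated through a trilinear map F on g_alpha: if phi = sum eta1 (x) eta2 (x) eta3
then this is sum F eta1 eta2 eta3\<close>
definition cartan_eval :: "nat \<Rightarrow> (nat \<Rightarrow> nat)
     \<Rightarrow> ((nat \<Rightarrow> nat \<Rightarrow> 'k::field) \<Rightarrow> (nat \<Rightarrow> nat \<Rightarrow> 'k) \<Rightarrow> (nat \<Rightarrow> nat \<Rightarrow> 'k) \<Rightarrow> 'r::ring_1) \<Rightarrow> ('k \<Rightarrow> 'r) \<Rightarrow> 'r" where
  "cartan_eval K \<alpha> F emb = emb (1/12) * (\<Sum>u\<in>gbasis K \<alpha>. \<Sum>v\<in>gbasis K \<alpha>. \<Sum>w\<in>gbasis K \<alpha>.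
      emb (cartan_coef K \<alpha> u v w) *
      wedge3 F (Emat (fst u) (snd u)) (Emat (fst v) (snd v)) (Emat (fst w) (snd w)))"

definition phiR :: "nat \<Rightarrow> (nat \<Rightarrow> nat) \<Rightarrow> ('a, 'k::field) rpoly \<Rightarrow> ('a, 'k) rpoly \<Rightarrow> ('a, 'k) rpoly \<Rightarrow> ('a, 'k) rpoly" where
  "phiR K \<alpha> p q r = cartan_eval K \<alpha> (\<lambda>x y z. etaR K \<alpha> x p * etaR K \<alpha> y q * etaR K \<alpha> z r) cst"

text \<open>components of a trivector in g_alpha^(x)3 (inside gl_N^(x)3, identified with 6-index arrays),
after applying the map M to each tensor factor\<close>
definition cartan_comp :: "nat \<Rightarrow> (nat \<Rightarrow> nat) \<Rightarrow> ((nat \<Rightarrow> nat \<Rightarrow> 'k::field) \<Rightarrow> (nat \<Rightarrow> nat \<Rightarrow> 'k))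
     \<Rightarrow> nat \<Rightarrow> nat \<Rightarrow> nat \<Rightarrow> nat \<Rightarrow> nat \<Rightarrow> nat \<Rightarrow> 'k" where
  "cartan_comp K \<alpha> M i1 j1 i2 j2 i3 j3 =
     cartan_eval K \<alpha> (\<lambda>x y z. M x i1 j1 * M y i2 j2 * M z i3 j3) id"

definition Adm :: "nat \<Rightarrow> (nat \<Rightarrow> nat \<Rightarrow> 'k::field) \<Rightarrow> (nat \<Rightarrow> nat \<Rightarrow> 'k) \<Rightarrow> (nat \<Rightarrow> nat \<Rightarrow> 'k) \<Rightarrow> (nat \<Rightarrow> nat \<Rightarrow> 'k)" where
  "Adm N g h x = mmul N (mmul N g x) h"

definition ind_br :: "('a \<Rightarrow> 'a \<Rightarrow> ('a \<times> 'a) list) \<Rightarrow> 'a \<Rightarrow> 'a \<Rightarrow> nat \<Rightarrow> nat \<Rightarrow> nat \<Rightarrow> nat \<Rightarrow> ('a, 'k::field) rpoly" where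
  "ind_br dbr a b i j k l = sum_list (map (\<lambda>(x, y). Xv x k j * Xv y i l) (dbr a b))"

end

theory Submission
  imports Defs
begin

text \<open>
  The bracket is the biderivation of the polynomial ring with the prescribed
  values on pairs of variables. Each required identity is, at least modulo I, a (twisted) derivation
  in each argument, so it suffices to check it on generators; there it reduces to the corresponding
  property of the double bracket, transported to R by the evaluation maps x \<otimes> y \<mapsto> x_kj y_il,
  which respect the relations defining the tensor product. On generators the Jacobiator is the
  evaluation of the triple bracket, i.e. of the right-hand side of the double quasi-Poisson
  identity, and both that and phi_R become the same sum over the blocks s of products of entries
  of x e_s y. The Cartan trivector is GL_alpha-invariant because its components are cyclic block
  sums of products of the matrix units E_ab, and conjugation by a block-diagonal g only inserts
  factors g g^-1 = 1 into them.
\<close>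

section \<open>Derivations and substitutions of polynomial rings\<close>

definition lin_ext :: "('b \<Rightarrow> ('c::comm_monoid_add \<Rightarrow>\<^sub>0 'k::comm_ring_1)) \<Rightarrow> ('b \<Rightarrow>\<^sub>0 'k) \<Rightarrow> ('c \<Rightarrow>\<^sub>0 'k)" where
  "lin_ext h p = (\<Sum>m\<in>Poly_Mapping.keys p. Poly_Mapping.single 0 (Poly_Mapping.lookup p m) * h m)"

lemma lin_ext_superset:
  "finite S \<Longrightarrow> Poly_Mapping.keys p \<subseteq> S \<Longrightarrow>
    lin_ext h p = (\<Sum>m\<in>S. Poly_Mapping.single 0 (Poly_Mapping.lookup p m) * h m)"
  unfolding lin_ext_def by (rule sum.mono_neutral_left) (auto simp: in_keys_iff)

lemma lin_ext_add: "lin_ext h (p + q) = lin_ext h p + lin_ext h q"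
  unfolding lin_ext_def
  by (rule setsum_keys_plus_distrib) (simp_all add: single_add distrib_right)

lemma lin_ext_zero [simp]: "lin_ext h 0 = 0"
  by (simp add: lin_ext_def)

lemma lin_ext_single [simp]: "lin_ext h (Poly_Mapping.single m c) = Poly_Mapping.single 0 c * h m"
  by (simp add: lin_ext_def)

lemma lin_ext_uminus: "lin_ext h (- p) = - lin_ext h p"
  using lin_ext_add[of h p "- p"] by (simp add: eq_neg_iff_add_eq_0 add.commute)

lemma lin_ext_diff: "lin_ext h (p - q) = lin_ext h p - lin_ext h q"
  using lin_ext_add[of h p "- q"] lin_ext_uminus[of h q] by simp

lemma lin_ext_sum: "lin_ext h (\<Sum>i\<in>S. f i) = (\<Sum>i\<in>S. lin_ext h (f i))"
  by (induction S rule: infinite_finite_induct) (auto simp: lin_ext_add)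

lemma lin_ext_scale:
  "lin_ext h (Poly_Mapping.map ((*) c) p) = Poly_Mapping.single 0 c * lin_ext h p"
proof -
  have "lin_ext h (Poly_Mapping.map ((*) c) p)
      = (\<Sum>m\<in>Poly_Mapping.keys p. Poly_Mapping.single 0 (c * Poly_Mapping.lookup p m) * h m)"
    by (subst lin_ext_superset[of "Poly_Mapping.keys p"])
      (auto simp: Poly_Mapping.map.rep_eq when_def in_keys_iff)
  then show ?thesis
    by (simp add: lin_ext_def sum_distrib_left mult.assoc[symmetric] mult_single)
qed

lemma lin_ext_fun_add: "lin_ext (\<lambda>m. h m + h' m) p = lin_ext h p + lin_ext h' p"
  by (simp add: lin_ext_def distrib_left sum.distrib)

lemma lin_ext_fun_mult_right: "lin_ext (\<lambda>m. h m * r) p = lin_ext h p * r"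
  by (simp add: lin_ext_def sum_distrib_right mult.assoc)

lemma poly_mapping_sum_single:
  "(\<Sum>k\<in>Poly_Mapping.keys p. Poly_Mapping.single k (Poly_Mapping.lookup p k)) = (p :: 'b \<Rightarrow>\<^sub>0 'c::comm_monoid_add)"
  by (rule poly_mapping_eqI) (simp add: lookup_sum lookup_single when_def in_keys_iff)

lemma poly_mapping_monomial_expansion:
  "(p :: 'c::comm_monoid_add \<Rightarrow>\<^sub>0 'k::comm_ring_1) =
    (\<Sum>m\<in>Poly_Mapping.keys p. Poly_Mapping.single 0 (Poly_Mapping.lookup p m) * Poly_Mapping.single m 1)"
  by (simp add: mult_single poly_mapping_sum_single)

lemma lin_ext_mult_expand:
  "lin_ext h ((p :: 'c::comm_monoid_add \<Rightarrow>\<^sub>0 'k::comm_ring_1) * q) =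
    (\<Sum>m\<in>Poly_Mapping.keys p. \<Sum>n\<in>Poly_Mapping.keys q.
      Poly_Mapping.single 0 (Poly_Mapping.lookup p m) * Poly_Mapping.single 0 (Poly_Mapping.lookup q n) * h (m + n))"
proof -
  have "p * q = (\<Sum>m\<in>Poly_Mapping.keys p. \<Sum>n\<in>Poly_Mapping.keys q.
      Poly_Mapping.single (m + n) (Poly_Mapping.lookup p m * Poly_Mapping.lookup q n))"
    by (subst (1 2) poly_mapping_monomial_expansion) (simp add: sum_product mult_single)
  then show ?thesis
    by (simp add: lin_ext_sum mult_single)
qed

lemma lin_ext_mult_hom:
  assumes "\<And>m n. h (m + n) = h m * h n"
  shows "lin_ext h ((p :: 'c::comm_monoid_add \<Rightarrow>\<^sub>0 'k::comm_ring_1) * q) = lin_ext h p * lin_ext h q"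
  unfolding lin_ext_mult_expand by (simp add: lin_ext_def sum_product assms mult_ac)

lemma lin_ext_mult_derivation:
  assumes "\<And>m n. h (m + n) = h m * Poly_Mapping.single n 1 + Poly_Mapping.single m 1 * h n"
  shows "lin_ext h ((p :: 'c::comm_monoid_add \<Rightarrow>\<^sub>0 'k::comm_ring_1) * q) = lin_ext h p * q + p * lin_ext h q"
proof -
  let ?c = "\<lambda>p m. Poly_Mapping.single 0 (Poly_Mapping.lookup p m) :: 'c \<Rightarrow>\<^sub>0 'k"
  have "lin_ext h (p * q) =
      (\<Sum>m\<in>Poly_Mapping.keys p. ?c p m * h m) * (\<Sum>n\<in>Poly_Mapping.keys q. ?c q n * Poly_Mapping.single n 1)
    + (\<Sum>m\<in>Poly_Mapping.keys p. ?c p m * Poly_Mapping.single m 1) * (\<Sum>n\<in>Poly_Mapping.keys q. ?c q n * h n)"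
    unfolding lin_ext_mult_expand sum_product by (simp add: assms distrib_left sum.distrib mult_ac)
  then show ?thesis
    by (simp flip: poly_mapping_monomial_expansion add: lin_ext_def)
qed

definition monom_der :: "('v \<Rightarrow> (('v \<Rightarrow>\<^sub>0 nat) \<Rightarrow>\<^sub>0 'k::comm_ring_1)) \<Rightarrow> ('v \<Rightarrow>\<^sub>0 nat) \<Rightarrow> (('v \<Rightarrow>\<^sub>0 nat) \<Rightarrow>\<^sub>0 'k)" where
  "monom_der d m = (\<Sum>v\<in>Poly_Mapping.keys m.
      of_nat (Poly_Mapping.lookup m v) * Poly_Mapping.single (m - Poly_Mapping.single v 1) 1 * d v)"

definition monom_subst :: "('v \<Rightarrow> (('v \<Rightarrow>\<^sub>0 nat) \<Rightarrow>\<^sub>0 'k::comm_ring_1)) \<Rightarrow> ('v \<Rightarrow>\<^sub>0 nat) \<Rightarrow> (('v \<Rightarrow>\<^sub>0 nat) \<Rightarrow>\<^sub>0 'k)" where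
  "monom_subst s m = (\<Prod>v\<in>Poly_Mapping.keys m. s v ^ Poly_Mapping.lookup m v)"

lemma pder_eq_lin_ext: "pder d = lin_ext (monom_der d)"
  by (simp add: fun_eq_iff pder_def lin_ext_def monom_der_def)

lemma psubst_eq_lin_ext: "psubst s = lin_ext (monom_subst s)"
  by (simp add: fun_eq_iff psubst_def lin_ext_def monom_subst_def)

lemma monom_der_superset:
  "finite S \<Longrightarrow> Poly_Mapping.keys m \<subseteq> S \<Longrightarrow> monom_der d m = (\<Sum>v\<in>S.
      of_nat (Poly_Mapping.lookup m v) * Poly_Mapping.single (m - Poly_Mapping.single v 1) 1 * d v)"
  unfolding monom_der_def by (rule sum.mono_neutral_left) (auto simp: in_keys_iff)

lemma monom_subst_superset:
  "finite S \<Longrightarrow> Poly_Mapping.keys m \<subseteq> S \<Longrightarrow> monom_subst s m = (\<Prod>v\<in>S. s v ^ Poly_Mapping.lookup m v)"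
  unfolding monom_subst_def by (rule prod.mono_neutral_left) (auto simp: in_keys_iff)

lemma monom_subst_add: "monom_subst s (m + n) = monom_subst s m * monom_subst s n"
proof -
  let ?S = "Poly_Mapping.keys m \<union> Poly_Mapping.keys n"
  have "monom_subst s (m + n) = (\<Prod>v\<in>?S. s v ^ Poly_Mapping.lookup m v) * (\<Prod>v\<in>?S. s v ^ Poly_Mapping.lookup n v)"
    by (subst monom_subst_superset[of ?S]) (auto simp: lookup_add power_add prod.distrib dest: keys_add[THEN subsetD])
  then show ?thesis
    by (simp add: monom_subst_superset[of ?S])
qed

lemma monom_der_add:
  fixes d :: "'v \<Rightarrow> (('v \<Rightarrow>\<^sub>0 nat) \<Rightarrow>\<^sub>0 'k::comm_ring_1)"
  shows "monom_der d (m + n) = monom_der d m * Poly_Mapping.single n 1 + Poly_Mapping.single m 1 * monom_der d n"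
proof -
  let ?S = "Poly_Mapping.keys m \<union> Poly_Mapping.keys n"
  let ?x = "\<lambda>v. Poly_Mapping.single v (1::nat)"
  have left: "of_nat (Poly_Mapping.lookup m v) * Poly_Mapping.single (m + n - ?x v) 1
      = of_nat (Poly_Mapping.lookup m v) * Poly_Mapping.single (m - ?x v) (1::'k) * Poly_Mapping.single n 1" for v
  proof (cases "Poly_Mapping.lookup m v = 0")
    case False
    then have "m + n - ?x v = (m - ?x v) + n"
      by (intro poly_mapping_eqI) (auto simp: lookup_add lookup_minus lookup_single when_def)
    then show ?thesis by (simp add: mult_single mult.assoc)
  qed simp
  have right: "of_nat (Poly_Mapping.lookup n v) * Poly_Mapping.single (m + n - ?x v) 1
      = Poly_Mapping.single m 1 * (of_nat (Poly_Mapping.lookup n v) * Poly_Mapping.single (n - ?x v) (1::'k))" for v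
  proof (cases "Poly_Mapping.lookup n v = 0")
    case False
    then have "m + n - ?x v = m + (n - ?x v)"
      by (intro poly_mapping_eqI) (auto simp: lookup_add lookup_minus lookup_single when_def)
    moreover have "Poly_Mapping.single (m + (n - ?x v)) (1::'k) = Poly_Mapping.single m 1 * Poly_Mapping.single (n - ?x v) 1"
      by (simp add: mult_single)
    ultimately show ?thesis by (simp add: mult_ac)
  qed simp
  have "monom_der d (m + n) = (\<Sum>v\<in>?S. of_nat (Poly_Mapping.lookup m v) * Poly_Mapping.single (m + n - ?x v) 1 * d v)
      + (\<Sum>v\<in>?S. of_nat (Poly_Mapping.lookup n v) * Poly_Mapping.single (m + n - ?x v) 1 * d v)"
    by (subst monom_der_superset[of ?S])
      (auto simp: lookup_add distrib_right sum.distrib dest: keys_add[THEN subsetD])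
  also have "\<dots> = (\<Sum>v\<in>?S. of_nat (Poly_Mapping.lookup m v) * Poly_Mapping.single (m - ?x v) 1 * d v) * Poly_Mapping.single n 1
      + Poly_Mapping.single m 1 * (\<Sum>v\<in>?S. of_nat (Poly_Mapping.lookup n v) * Poly_Mapping.single (n - ?x v) 1 * d v)"
    unfolding left right sum_distrib_left sum_distrib_right by (simp add: mult_ac)
  also have "\<dots> = monom_der d m * Poly_Mapping.single n 1 + Poly_Mapping.single m 1 * monom_der d n"
    by (simp add: monom_der_superset[of ?S])
  finally show ?thesis .
qed

lemma pder_add: "pder d (p + q) = pder d p + pder d q"
  by (simp add: pder_eq_lin_ext lin_ext_add)

lemma pder_diff: "pder d (p - q) = pder d p - pder d q"
  by (simp add: pder_eq_lin_ext lin_ext_diff)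

lemma pder_mult: "pder d (p * q) = pder d p * q + p * pder d q"
  unfolding pder_eq_lin_ext by (rule lin_ext_mult_derivation) (rule monom_der_add)

lemma pder_const [simp]: "pder d (Poly_Mapping.single 0 c) = 0"
  by (simp add: pder_eq_lin_ext monom_der_def)

lemma pder_var [simp]: "pder d (Poly_Mapping.single (Poly_Mapping.single v 1) 1) = d v"
  by (simp add: pder_eq_lin_ext monom_der_def)

lemma pder_fun_add: "pder (\<lambda>v. d v + d' v) p = pder d p + pder d' p"
proof -
  have "monom_der (\<lambda>v. d v + d' v) = (\<lambda>m. monom_der d m + monom_der d' m)"
    by (simp add: fun_eq_iff monom_der_def distrib_left sum.distrib)
  then show ?thesis by (simp add: pder_eq_lin_ext lin_ext_fun_add)
qed

lemma pder_fun_mult_right: "pder (\<lambda>v. d v * r) p = pder d p * r"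
proof -
  have "monom_der (\<lambda>v. d v * r) = (\<lambda>m. monom_der d m * r)"
    by (simp add: fun_eq_iff monom_der_def sum_distrib_right mult.assoc)
  then show ?thesis by (simp add: pder_eq_lin_ext lin_ext_fun_mult_right)
qed

lemma pder_fun_mult_left: "pder (\<lambda>v. r * d v) p = r * pder d p"
  using pder_fun_mult_right[of d r p] by (simp add: mult.commute)

lemma pder_fun_zero [simp]: "pder (\<lambda>v. 0) p = 0"
  by (simp add: pder_eq_lin_ext monom_der_def lin_ext_def)

lemma psubst_add: "psubst s (p + q) = psubst s p + psubst s q"
  by (simp add: psubst_eq_lin_ext lin_ext_add)

lemma psubst_mult: "psubst s (p * q) = psubst s p * psubst s q"
  unfolding psubst_eq_lin_ext by (rule lin_ext_mult_hom) (rule monom_subst_add)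

lemma psubst_const [simp]: "psubst s (Poly_Mapping.single 0 c) = Poly_Mapping.single 0 c"
  by (simp add: psubst_eq_lin_ext monom_subst_def)

lemma psubst_var [simp]: "psubst s (Poly_Mapping.single (Poly_Mapping.single v 1) 1) = s v"
  by (simp add: psubst_eq_lin_ext monom_subst_def)

lemma monomial_induct:
  fixes Q :: "(('v \<Rightarrow>\<^sub>0 nat) \<Rightarrow>\<^sub>0 'k::comm_ring_1) \<Rightarrow> bool"
  assumes one: "Q 1" and var: "\<And>v. Q (Poly_Mapping.single (Poly_Mapping.single v 1) 1)"
    and mult: "\<And>p q. Q p \<Longrightarrow> Q q \<Longrightarrow> Q (p * q)"
  shows "Q (Poly_Mapping.single m 1)"
proof -
  have power: "Q (Poly_Mapping.single (Poly_Mapping.single v n) 1)" for v n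
  proof (induction n)
    case (Suc n)
    have "Poly_Mapping.single (Poly_Mapping.single v (Suc n)) (1::'k) =
        Poly_Mapping.single (Poly_Mapping.single v 1) 1 * Poly_Mapping.single (Poly_Mapping.single v n) 1"
      by (simp add: mult_single single_add[symmetric])
    then show ?case using mult[OF var Suc] by simp
  qed (use one in simp)
  have "Q (Poly_Mapping.single (\<Sum>v\<in>S. Poly_Mapping.single v (f v)) 1)" if "finite S" for S f
    using that
  proof (induction S rule: finite_induct)
    case (insert x F)
    then show ?case using mult[OF power insert.IH] by (simp add: mult_single)
  qed (use one in simp)
  then show ?thesis
    using poly_mapping_sum_single[of m] by (metis finite_keys)
qed

lemma polynomial_induct [case_names const var add mult]:
  fixes Q :: "(('v \<Rightarrow>\<^sub>0 nat) \<Rightarrow>\<^sub>0 'k::comm_ring_1) \<Rightarrow> bool"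
  assumes const: "\<And>c. Q (Poly_Mapping.single 0 c)"
    and var: "\<And>v. Q (Poly_Mapping.single (Poly_Mapping.single v 1) 1)"
    and add: "\<And>p q. Q p \<Longrightarrow> Q q \<Longrightarrow> Q (p + q)"
    and mult: "\<And>p q. Q p \<Longrightarrow> Q q \<Longrightarrow> Q (p * q)"
  shows "Q p"
proof -
  have monomial: "Q (Poly_Mapping.single m 1)" for m
    by (rule monomial_induct) (use const[of 1] var mult in simp_all)
  have "Q (\<Sum>m\<in>S. Poly_Mapping.single 0 (f m) * Poly_Mapping.single m 1)" if "finite S" for S f
    using that
  proof (induction S rule: finite_induct)
    case empty
    then show ?case using const[of 0] by simp
  next
    case (insert x F)
    then show ?case using add[OF mult[OF const monomial] insert.IH] by simp
  qed
  then show ?thesis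
    by (subst poly_mapping_monomial_expansion) simp
qed

lemma cst_mult: "cst (a * b) = cst a * cst b"
  by (simp add: cst_def mult_single)

lemma cst_uminus: "cst (- a) = - cst a"
  by (simp add: cst_def single_uminus)

lemma cst_0 [simp]: "cst 0 = 0"
  by (simp add: cst_def)

lemma cst_1 [simp]: "cst 1 = 1"
  by (simp add: cst_def)

lemma rpoly_induct [case_names const var add mult]:
  fixes Q :: "('a, 'k::field) rpoly \<Rightarrow> bool"
  assumes "\<And>c. Q (cst c)" and "\<And>a i j. Q (Xv a i j)"
    and "\<And>p q. Q p \<Longrightarrow> Q q \<Longrightarrow> Q (p + q)" and "\<And>p q. Q p \<Longrightarrow> Q q \<Longrightarrow> Q (p * q)"
  shows "Q p"
  by (rule polynomial_induct) (use assms in \<open>auto simp: cst_def Xv_def\<close>)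

section \<open>Ideals and evaluation of tensors\<close>

lemma igen_base: "g \<in> G \<Longrightarrow> g \<in> igen G"
  using igen_step[of g G 0 1] igen_zero[of G] by simp

lemma igen_add: "p \<in> igen G \<Longrightarrow> q \<in> igen G \<Longrightarrow> p + q \<in> igen G"
  by (induction p rule: igen.induct) (auto simp: add.assoc intro: igen_step)

lemma igen_mult_left: "p \<in> igen G \<Longrightarrow> s * p \<in> igen G"
proof (induction p rule: igen.induct)
  case igen_zero
  then show ?case by (simp add: igen.igen_zero)
next
  case (igen_step g p r)
  then show ?case using igen.igen_step[of g G "s * p" "s * r"] by (simp add: distrib_left mult.assoc)
qed

definition eval2 :: "('b \<Rightarrow> 'r::comm_ring) \<Rightarrow> ('b \<Rightarrow> 'r) \<Rightarrow> ('b \<times> 'b) list \<Rightarrow> 'r" where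
  "eval2 f g L = sum_list (map (\<lambda>(x, y). f x * g y) L)"

definition eval3 :: "('b \<Rightarrow> 'r::comm_ring) \<Rightarrow> ('b \<Rightarrow> 'r) \<Rightarrow> ('b \<Rightarrow> 'r) \<Rightarrow> ('b \<times> 'b \<times> 'b) list \<Rightarrow> 'r" where
  "eval3 f g h L = sum_list (map (\<lambda>(x, y, z). f x * g y * h z) L)"

lemma eval2_Nil [simp]: "eval2 f g [] = 0"
  by (simp add: eval2_def)

lemma eval2_Cons [simp]: "eval2 f g ((x, y) # L) = f x * g y + eval2 f g L"
  by (simp add: eval2_def)

lemma eval2_append [simp]: "eval2 f g (L @ M) = eval2 f g L + eval2 f g M"
  by (simp add: eval2_def)

lemma eval2_map_left: "eval2 f g (map (\<lambda>(u, v). (h u, v)) L) = eval2 (\<lambda>u. f (h u)) g L"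
  by (induction L) auto

lemma eval2_map_right: "eval2 f g (map (\<lambda>(u, v). (u, h v)) L) = eval2 f (\<lambda>v. g (h v)) L"
  by (induction L) auto

lemma eval2_map_swap: "eval2 f g (map (\<lambda>(u, v). (h v, u)) L) = eval2 g (\<lambda>v. f (h v)) L"
  by (induction L) (auto simp: mult.commute)

lemma eval2_sum_left: "eval2 (\<lambda>x. \<Sum>m\<in>S. f m x) g L = (\<Sum>m\<in>S. eval2 (f m) g L)"
  by (induction L) (auto simp: sum.distrib sum_distrib_right)

lemma eval2_sum_right: "eval2 f (\<lambda>x. \<Sum>m\<in>S. g m x) L = (\<Sum>m\<in>S. eval2 f (g m) L)"
  by (induction L) (auto simp: sum.distrib sum_distrib_left)

lemma eval2_cmult_left: "eval2 (\<lambda>x. r * f x) g L = r * eval2 f g L"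
  by (induction L) (auto simp: algebra_simps)

lemma eval2_multc_left: "eval2 (\<lambda>x. f x * r) g L = eval2 f g L * r"
  by (induction L) (auto simp: algebra_simps)

lemma eval2_cmult_right: "eval2 f (\<lambda>y. r * g y) L = r * eval2 f g L"
  by (induction L) (auto simp: algebra_simps)

lemma eval2_multc_right: "eval2 f (\<lambda>y. g y * r) L = eval2 f g L * r"
  by (induction L) (auto simp: algebra_simps)

lemma eval2_diff_left: "eval2 (\<lambda>x. f x - f' x) g L = eval2 f g L - eval2 f' g L"
  by (induction L) (auto simp: algebra_simps)

lemma eval2_diff_right: "eval2 f (\<lambda>x. g x - g' x) L = eval2 f g L - eval2 f g' L"
  by (induction L) (auto simp: algebra_simps)

lemma eval3_append [simp]: "eval3 f g h (L @ M) = eval3 f g h L + eval3 f g h M"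
  by (simp add: eval3_def)

lemma eval3_concat: "eval3 f g h (concat (map F xs)) = (\<Sum>x\<leftarrow>xs. eval3 f g h (F x))"
  by (induction xs) (simp_all add: eval3_def)

lemma eval3_tau3: "eval3 f g h (map tau3 L) = eval3 g h f L"
  by (induction L) (auto simp: eval3_def tau3_def mult_ac)

lemma eval3_triple_bracket:
  "eval3 f g h (triple_bracket dbr a b c) = eval3 f g h (dbr_out dbr a (dbr b c))
    + eval3 g h f (dbr_out dbr b (dbr c a)) + eval3 h f g (dbr_out dbr c (dbr a b))"
  by (simp add: triple_bracket_def eval3_tau3 flip: map_map)

lemma eval3_dbr_out:
  "eval3 f g h (dbr_out dbr a L) = eval2 (\<lambda>u. eval2 f g (dbr a u)) h L"
proof (induction L)
  case Nil
  then show ?case by (simp add: eval3_def dbr_out_def)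
next
  case (Cons t L)
  obtain u v where t: "t = (u, v)" by (cases t)
  have "eval3 f g h (map (\<lambda>(x, y). (x, y, v)) M) = eval2 f g M * h v" for M
    by (induction M) (auto simp: eval3_def algebra_simps)
  with Cons show ?case by (simp add: dbr_out_def t)
qed

section \<open>Blocks and the Cartan trivector\<close>

lemma block_end_le: "s < t \<Longrightarrow> (\<Sum>r<s. \<alpha> r) + \<alpha> s \<le> (\<Sum>r<t. (\<alpha> :: nat \<Rightarrow> nat) r)"
  using sum_mono2[of "{..<t}" "{..<Suc s}" \<alpha>] by simp

lemma inblock_unique: "inblock \<alpha> s i \<Longrightarrow> inblock \<alpha> t i \<Longrightarrow> s = t"
  using block_end_le[of s t \<alpha>] block_end_le[of t s \<alpha>] by (cases s t rule: linorder_cases) (auto simp: inblock_def)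

lemma inblock_exists: "i < (\<Sum>t<n. \<alpha> t) \<Longrightarrow> \<exists>s<n. inblock \<alpha> s i"
proof (induction n)
  case (Suc n)
  then show ?case
    by (cases "i < (\<Sum>t<n. \<alpha> t)") (auto simp: inblock_def intro: less_SucI)
qed simp

lemma inblock_less_dimN: "s < K \<Longrightarrow> inblock \<alpha> s i \<Longrightarrow> i < dimN K \<alpha>"
  using block_end_le[of s K \<alpha>] by (auto simp: inblock_def dimN_def)

lemma sameblock_sym: "sameblock K \<alpha> i j \<Longrightarrow> sameblock K \<alpha> j i"
  by (auto simp: sameblock_def)

lemma sameblock_trans: "sameblock K \<alpha> i j \<Longrightarrow> sameblock K \<alpha> j k \<Longrightarrow> sameblock K \<alpha> i k"
  unfolding sameblock_def using inblock_unique by metis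

lemma sameblock_refl: "i < dimN K \<alpha> \<Longrightarrow> sameblock K \<alpha> i i"
  using inblock_exists[of i \<alpha> K] by (auto simp: sameblock_def dimN_def)

lemma sum_swap_13:
  "(\<Sum>a\<in>A. \<Sum>b\<in>B. \<Sum>c\<in>C. f a b c) = (\<Sum>c\<in>C. \<Sum>b\<in>B. \<Sum>a\<in>A. f a b c)"
proof -
  have "(\<Sum>a\<in>A. \<Sum>b\<in>B. \<Sum>c\<in>C. f a b c) = (\<Sum>b\<in>B. \<Sum>a\<in>A. \<Sum>c\<in>C. f a b c)"
    by (rule sum.swap)
  also have "\<dots> = (\<Sum>b\<in>B. \<Sum>c\<in>C. \<Sum>a\<in>A. f a b c)"
    by (intro sum.cong refl sum.swap)
  also have "\<dots> = (\<Sum>c\<in>C. \<Sum>b\<in>B. \<Sum>a\<in>A. f a b c)"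
    by (rule sum.swap)
  finally show ?thesis .
qed

lemma sum_permute3:
  fixes f :: "'b \<Rightarrow> 'b \<Rightarrow> 'b \<Rightarrow> 'r::comm_monoid_add"
  shows "(\<Sum>u\<in>S. \<Sum>v\<in>S. \<Sum>w\<in>S. f v u w) = (\<Sum>u\<in>S. \<Sum>v\<in>S. \<Sum>w\<in>S. f u v w)"
    and "(\<Sum>u\<in>S. \<Sum>v\<in>S. \<Sum>w\<in>S. f u w v) = (\<Sum>u\<in>S. \<Sum>v\<in>S. \<Sum>w\<in>S. f u v w)"
    and "(\<Sum>u\<in>S. \<Sum>v\<in>S. \<Sum>w\<in>S. f w v u) = (\<Sum>u\<in>S. \<Sum>v\<in>S. \<Sum>w\<in>S. f u v w)"
    and "(\<Sum>u\<in>S. \<Sum>v\<in>S. \<Sum>w\<in>S. f v w u) = (\<Sum>u\<in>S. \<Sum>v\<in>S. \<Sum>w\<in>S. f u v w)"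
    and "(\<Sum>u\<in>S. \<Sum>v\<in>S. \<Sum>w\<in>S. f w u v) = (\<Sum>u\<in>S. \<Sum>v\<in>S. \<Sum>w\<in>S. f u v w)"
proof -
  show swap12: "(\<Sum>u\<in>S. \<Sum>v\<in>S. \<Sum>w\<in>S. f v u w) = (\<Sum>u\<in>S. \<Sum>v\<in>S. \<Sum>w\<in>S. f u v w)" for f
    by (rule sum.swap)
  show swap23: "(\<Sum>u\<in>S. \<Sum>v\<in>S. \<Sum>w\<in>S. f u w v) = (\<Sum>u\<in>S. \<Sum>v\<in>S. \<Sum>w\<in>S. f u v w)" for f
    by (intro sum.cong refl sum.swap)
  show "(\<Sum>u\<in>S. \<Sum>v\<in>S. \<Sum>w\<in>S. f w v u) = (\<Sum>u\<in>S. \<Sum>v\<in>S. \<Sum>w\<in>S. f u v w)"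
    by (rule sum_swap_13)
  show "(\<Sum>u\<in>S. \<Sum>v\<in>S. \<Sum>w\<in>S. f v w u) = (\<Sum>u\<in>S. \<Sum>v\<in>S. \<Sum>w\<in>S. f u v w)"
    by (rule trans[OF swap12[of "\<lambda>u v w. f u w v"] swap23[of f]])
  show "(\<Sum>u\<in>S. \<Sum>v\<in>S. \<Sum>w\<in>S. f w u v) = (\<Sum>u\<in>S. \<Sum>v\<in>S. \<Sum>w\<in>S. f u v w)"
    by (rule trans[OF swap23[of "\<lambda>u v w. f w u v", symmetric] swap12[of f]])
qed

lemma sum_wedge3_alternating:
  fixes c F :: "'b \<Rightarrow> 'b \<Rightarrow> 'b \<Rightarrow> 'r::comm_ring_1"
  assumes c12: "\<And>u v w. c v u w = - c u v w" and c23: "\<And>u v w. c u w v = - c u v w"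
  shows "(\<Sum>u\<in>S. \<Sum>v\<in>S. \<Sum>w\<in>S. c u v w * wedge3 F u v w) = 6 * (\<Sum>u\<in>S. \<Sum>v\<in>S. \<Sum>w\<in>S. c u v w * F u v w)"
proof -
  have n: "c v u w * x = - (c u v w * x)" "c u w v * x = - (c u v w * x)" "c w v u * x = - (c u v w * x)"
      "c w u v * x = c u v w * x" "c v w u * x = c u v w * x" for u v w x
    using c12[of u v w] c23[of u v w] c12[of v w u] c23[of v u w] c12[of u w v] by simp_all
  let ?S = "\<lambda>f. \<Sum>u\<in>S. \<Sum>v\<in>S. \<Sum>w\<in>S. f u v w"
  let ?B = "?S (\<lambda>u v w. c u v w * F u v w)"
  have "?S (\<lambda>u v w. c u v w * F v u w) = - ?B"
    by (rule trans[OF sum_permute3(1)]) (unfold sum_negf[symmetric], intro sum.cong refl n)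
  moreover have "?S (\<lambda>u v w. c u v w * F u w v) = - ?B"
    by (rule trans[OF sum_permute3(2)]) (unfold sum_negf[symmetric], intro sum.cong refl n)
  moreover have "?S (\<lambda>u v w. c u v w * F w v u) = - ?B"
    by (rule trans[OF sum_permute3(3)]) (unfold sum_negf[symmetric], intro sum.cong refl n)
  moreover have "?S (\<lambda>u v w. c u v w * F v w u) = ?B"
    by (rule trans[OF sum_permute3(4)]) (intro sum.cong refl n)
  moreover have "?S (\<lambda>u v w. c u v w * F w u v) = ?B"
    by (rule trans[OF sum_permute3(5)]) (intro sum.cong refl n)
  ultimately show ?thesis
    by (simp add: wedge3_def right_diff_distrib distrib_left sum.distrib sum_subtractf)
qed

lemma finite_gbasis: "finite (gbasis K \<alpha>)"
  by (rule finite_subset[of _ "{..<dimN K \<alpha>} \<times> {..<dimN K \<alpha>}"]) (auto simp: gbasis_def)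

definition index_cycle :: "nat \<times> nat \<Rightarrow> nat \<times> nat \<Rightarrow> nat \<times> nat \<Rightarrow> bool" where
  "index_cycle u v w \<longleftrightarrow> fst u = snd v \<and> fst v = snd w \<and> fst w = snd u"

lemma sum_gbasis_triangles:
  fixes G :: "nat \<times> nat \<Rightarrow> nat \<times> nat \<Rightarrow> nat \<times> nat \<Rightarrow> 'r::comm_monoid_add"
    and K :: nat and \<alpha> :: "nat \<Rightarrow> nat"
  defines "S \<equiv> sameblock K \<alpha>" and "N \<equiv> dimN K \<alpha>"
  shows "(\<Sum>u\<in>gbasis K \<alpha>. \<Sum>v\<in>gbasis K \<alpha>. \<Sum>w\<in>gbasis K \<alpha>.
      if index_cycle u v w then G u v w else 0)
    = (\<Sum>a<N. \<Sum>b<N. \<Sum>c<N. if S a b \<and> S c a \<and> S b c then G (a, b) (c, a) (b, c) else 0)"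
proof -
  let ?B = "gbasis K \<alpha>"
  let ?T = "{(a, b, c). a < N \<and> b < N \<and> c < N \<and> S a b \<and> S c a \<and> S b c}"
  let ?\<tau> = "\<lambda>(a, b, c). ((a, b), (c, a), (b, c))"
  have B3: "finite (?B \<times> ?B \<times> ?B)" and N3: "finite ({..<N} \<times> {..<N} \<times> {..<N})"
    using finite_gbasis by auto
  have "{t \<in> ?B \<times> ?B \<times> ?B. case t of (u, v, w) \<Rightarrow> index_cycle u v w} = ?\<tau> ` ?T"
    by (force simp: gbasis_def index_cycle_def S_def N_def image_iff)
  moreover have "{t \<in> {..<N} \<times> {..<N} \<times> {..<N}. case t of (a, b, c) \<Rightarrow> S a b \<and> S c a \<and> S b c} = ?T"
    by auto
  moreover have "inj_on ?\<tau> ?T"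
    by (auto simp: inj_on_def)
  ultimately show ?thesis
    by (simp add: sum.cartesian_product sum.inter_filter[OF B3, symmetric] sum.inter_filter[OF N3, symmetric]
        sum.reindex case_prod_unfold cong: if_cong)
qed

lemma mmul_Emat:
  assumes "b < N"
  shows "mmul N (Emat a b) (Emat c d) i j = (if i = a \<and> b = c \<and> j = d then 1 else 0)"
proof -
  have "mmul N (Emat a b) (Emat c d) i j = (\<Sum>k<N. if k = b then Emat a b i b * Emat c d b j else 0)"
    unfolding mmul_def by (rule sum.cong) (auto simp: Emat_def)
  also have "\<dots> = Emat a b i b * Emat c d b j"
    using assms by simp
  also have "\<dots> = (if i = a \<and> b = c \<and> j = d then 1 else 0)"
    by (simp add: Emat_def)
  finally show ?thesis .
qed

lemma trpair_Emat:
  assumes "a < N" "b < N"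
  shows "trpair N (Emat a b) y = y b a"
proof -
  have "(\<Sum>c<N. Emat a b r c * y c r) = (if r = a then y b r else 0)" for r
  proof -
    have "(\<Sum>c<N. Emat a b r c * y c r) = (\<Sum>c<N. if c = b then (if r = a then y c r else 0) else 0)"
      by (rule sum.cong) (auto simp: Emat_def)
    with assms show ?thesis
      by simp
  qed
  with assms show ?thesis
    by (simp add: trpair_def)
qed

lemma cartan_coef_gbasis:
  assumes "u \<in> gbasis K \<alpha>" "v \<in> gbasis K \<alpha>" "w \<in> gbasis K \<alpha>"
  shows "cartan_coef K \<alpha> u v w = (if index_cycle u v w then 1 else 0) - (if index_cycle u w v then 1 else 0)"
proof -
  have lt: "snd u < dimN K \<alpha>" "fst u < dimN K \<alpha>" "fst v < dimN K \<alpha>" "fst w < dimN K \<alpha>"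
    using assms by (auto simp: gbasis_def)
  show ?thesis
    unfolding cartan_coef_def trpair_Emat[OF lt(1,2)] mbr_def mmul_Emat[OF lt(3)] mmul_Emat[OF lt(4)]
      index_cycle_def
    by (intro arg_cong2[where f = "(-)"] if_cong) auto
qed

definition cartan_cyclic_sum :: "nat \<Rightarrow> (nat \<Rightarrow> nat)
    \<Rightarrow> ((nat \<Rightarrow> nat \<Rightarrow> 'k::field) \<Rightarrow> (nat \<Rightarrow> nat \<Rightarrow> 'k) \<Rightarrow> (nat \<Rightarrow> nat \<Rightarrow> 'k) \<Rightarrow> 'r::comm_monoid_add) \<Rightarrow> 'r" where
  "cartan_cyclic_sum K \<alpha> F = (\<Sum>a<dimN K \<alpha>. \<Sum>b<dimN K \<alpha>. \<Sum>c<dimN K \<alpha>.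
     if sameblock K \<alpha> a b \<and> sameblock K \<alpha> c a \<and> sameblock K \<alpha> b c then F (Emat a b) (Emat c a) (Emat b c) else 0)"

lemma cartan_eval_eq_cyclic_sums:
  fixes emb :: "'k::field \<Rightarrow> 'r::comm_ring_1"
  assumes emb: "emb 0 = 0" "emb 1 = 1" "emb (- 1) = - 1"
  shows "cartan_eval K \<alpha> F emb
    = emb (1/12) * 6 * (cartan_cyclic_sum K \<alpha> F - cartan_cyclic_sum K \<alpha> (\<lambda>x y z. F x z y))"
proof -
  let ?B = "gbasis K \<alpha>"
  let ?F = "\<lambda>u v w. F (Emat (fst u) (snd u)) (Emat (fst v) (snd v)) (Emat (fst w) (snd w))"
  let ?c = "\<lambda>u v w. (if index_cycle u v w then 1 else 0) - (if index_cycle u w v then 1 else (0::'r))"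
  have emb_coef: "emb (cartan_coef K \<alpha> u v w) = ?c u v w" if "u \<in> ?B" "v \<in> ?B" "w \<in> ?B" for u v w
    by (simp add: cartan_coef_gbasis[OF that] emb)
  have "cartan_eval K \<alpha> F emb = emb (1/12) * (\<Sum>u\<in>?B. \<Sum>v\<in>?B. \<Sum>w\<in>?B. ?c u v w * wedge3 ?F u v w)"
    unfolding cartan_eval_def wedge3_def by (intro arg_cong2[where f = "(*)"] sum.cong refl) (simp add: emb_coef)
  also have "\<dots> = emb (1/12) * 6 * (\<Sum>u\<in>?B. \<Sum>v\<in>?B. \<Sum>w\<in>?B. ?c u v w * ?F u v w)"
  proof -
    have "?c v u w = - ?c u v w" for u v w
    proof -
      have "index_cycle v u w = index_cycle u w v" "index_cycle v w u = index_cycle u v w"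
        by (auto simp: index_cycle_def)
      then show ?thesis
        by simp
    qed
    moreover have "?c u w v = - ?c u v w" for u v w
      by simp
    ultimately have "(\<Sum>u\<in>?B. \<Sum>v\<in>?B. \<Sum>w\<in>?B. ?c u v w * wedge3 ?F u v w)
        = 6 * (\<Sum>u\<in>?B. \<Sum>v\<in>?B. \<Sum>w\<in>?B. ?c u v w * ?F u v w)"
      by (rule sum_wedge3_alternating)
    then show ?thesis
      by (simp only: mult.assoc)
  qed
  also have "(\<Sum>u\<in>?B. \<Sum>v\<in>?B. \<Sum>w\<in>?B. ?c u v w * ?F u v w)
      = (\<Sum>u\<in>?B. \<Sum>v\<in>?B. \<Sum>w\<in>?B. if index_cycle u v w then ?F u v w else 0)
      - (\<Sum>u\<in>?B. \<Sum>v\<in>?B. \<Sum>w\<in>?B. if index_cycle u w v then ?F u v w else 0)"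
    by (simp add: left_diff_distrib sum_subtractf if_distrib[of "\<lambda>x. x * _"] cong: if_cong)
  also have "(\<Sum>u\<in>?B. \<Sum>v\<in>?B. \<Sum>w\<in>?B. if index_cycle u w v then ?F u v w else 0)
      = (\<Sum>u\<in>?B. \<Sum>v\<in>?B. \<Sum>w\<in>?B. if index_cycle u v w then ?F u w v else 0)"
    by (rule sum_permute3(2))
  finally show ?thesis
    by (simp only: sum_gbasis_triangles cartan_cyclic_sum_def fst_conv snd_conv)
qed

lemma cartan_comp_eq_cyclic_sums:
  fixes M :: "(nat \<Rightarrow> nat \<Rightarrow> 'k::field_char_0) \<Rightarrow> (nat \<Rightarrow> nat \<Rightarrow> 'k)"
  shows "cartan_comp K \<alpha> M i1 j1 i2 j2 i3 j3 = 1/2 *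
    (cartan_cyclic_sum K \<alpha> (\<lambda>x y z. M x i1 j1 * M y i2 j2 * M z i3 j3)
   - cartan_cyclic_sum K \<alpha> (\<lambda>x y z. M x i1 j1 * M y i3 j3 * M z i2 j2))"
  unfolding cartan_comp_def by (subst cartan_eval_eq_cyclic_sums) (simp_all add: mult_ac)

lemma Adm_Emat:
  assumes "a < N" "b < N"
  shows "Adm N g h (Emat a b) i j = g i a * h b j"
proof -
  have "(\<Sum>k<N. g i k * Emat a b k l) = (if l = b then g i a else 0)" for l
  proof -
    have "(\<Sum>k<N. g i k * Emat a b k l) = (\<Sum>k<N. if k = a then (if l = b then g i a else 0) else 0)"
      by (rule sum.cong) (auto simp: Emat_def)
    with assms show ?thesis
      by simp
  qed
  then have "Adm N g h (Emat a b) i j = (\<Sum>l<N. if l = b then g i a * h l j else 0)"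
    by (simp add: Adm_def mmul_def if_distrib[of "\<lambda>x. x * _"] cong: if_cong)
  with assms show ?thesis
    by simp
qed

lemma sum_product3:
  "(\<Sum>a\<in>A. f a) * (\<Sum>b\<in>B. g b) * (\<Sum>c\<in>C. h c) = (\<Sum>a\<in>A. \<Sum>b\<in>B. \<Sum>c\<in>C. f a * g b * (h c :: 'r::comm_semiring_0))"
proof -
  have "(\<Sum>a\<in>A. f a) * (\<Sum>b\<in>B. g b) * (\<Sum>c\<in>C. h c) = (\<Sum>a\<in>A. \<Sum>b\<in>B. f a * g b) * (\<Sum>c\<in>C. h c)"
    by (simp only: sum_product)
  also have "\<dots> = (\<Sum>a\<in>A. \<Sum>b\<in>B. f a * g b * (\<Sum>c\<in>C. h c))"
    by (simp only: sum_distrib_right)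
  finally show ?thesis
    by (simp only: sum_distrib_left)
qed

lemma cyclic_sum_Adm:
  fixes g h :: "nat \<Rightarrow> nat \<Rightarrow> 'k::field" and K :: nat and \<alpha> :: "nat \<Rightarrow> nat"
  defines "N \<equiv> dimN K \<alpha>" and "S \<equiv> sameblock K \<alpha>"
  assumes GL: "in_GLalpha K \<alpha> g h"
  shows "cartan_cyclic_sum K \<alpha> (\<lambda>x y z. Adm N g h x i1 j1 * Adm N g h y i2 j2 * Adm N g h z i3 j3)
    = (if S i1 i3 \<and> S i2 i1 \<and> S i3 i2 then idm N i1 j2 * idm N i3 j1 * idm N i2 j3 else 0)"
proof -
  have block: "g i a \<noteq> 0 \<Longrightarrow> S i a" for i a
    using GL by (auto simp: in_GLalpha_def in_galpha_def S_def)
  have inverse: "(\<Sum>a<N. g i a * h a j) = idm N i j" for i j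
    using GL by (auto simp: in_GLalpha_def mmul_def N_def dest: fun_cong)
  have "cartan_cyclic_sum K \<alpha> (\<lambda>x y z. Adm N g h x i1 j1 * Adm N g h y i2 j2 * Adm N g h z i3 j3)
      = (\<Sum>a<N. \<Sum>b<N. \<Sum>c<N. if S i1 i3 \<and> S i2 i1 \<and> S i3 i2 then
          (g i1 a * h a j2) * (g i3 b * h b j1) * (g i2 c * h c j3) else 0)"
    unfolding cartan_cyclic_sum_def N_def[symmetric] S_def[symmetric]
  proof (intro sum.cong refl)
    fix a b c
    assume abc: "a \<in> {..<N}" "b \<in> {..<N}" "c \<in> {..<N}"
    show "(if S a b \<and> S c a \<and> S b c then
        Adm N g h (Emat a b) i1 j1 * Adm N g h (Emat c a) i2 j2 * Adm N g h (Emat b c) i3 j3 else 0)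
      = (if S i1 i3 \<and> S i2 i1 \<and> S i3 i2 then (g i1 a * h a j2) * (g i3 b * h b j1) * (g i2 c * h c j3) else 0)"
    proof (cases "g i1 a = 0 \<or> g i3 b = 0 \<or> g i2 c = 0")
      case False
      then have "S i1 a" "S i3 b" "S i2 c"
        using block by auto
      then have "(S a b \<and> S c a \<and> S b c) = (S i1 i3 \<and> S i2 i1 \<and> S i3 i2)"
        unfolding S_def by (meson sameblock_sym sameblock_trans)
      then show ?thesis
        using abc by (simp add: Adm_Emat mult_ac)
    qed (use abc in \<open>auto simp: Adm_Emat\<close>)
  qed
  also have "\<dots> = (if S i1 i3 \<and> S i2 i1 \<and> S i3 i2 then
      (\<Sum>a<N. g i1 a * h a j2) * (\<Sum>b<N. g i3 b * h b j1) * (\<Sum>c<N. g i2 c * h c j3) else 0)"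
  proof (cases "S i1 i3 \<and> S i2 i1 \<and> S i3 i2")
    case False
    then show ?thesis
      by (simp only: if_False sum.neutral_const)
  qed (simp add: sum_product3)
  finally show ?thesis
    by (simp only: inverse)
qed

lemma cartan_comp_cong:
  assumes "\<And>a b. a < dimN K \<alpha> \<Longrightarrow> b < dimN K \<alpha> \<Longrightarrow> M (Emat a b) = M' (Emat a b)"
  shows "cartan_comp K \<alpha> M = cartan_comp K \<alpha> M'"
proof -
  have "M (Emat (fst u) (snd u)) = M' (Emat (fst u) (snd u))" if "u \<in> gbasis K \<alpha>" for u
    using that assms by (auto simp: gbasis_def)
  then show ?thesis
    by (intro ext) (simp add: cartan_comp_def cartan_eval_def wedge3_def cong: sum.cong)
qed

lemma in_GLalpha_idm: "in_GLalpha K \<alpha> (idm (dimN K \<alpha>) :: nat \<Rightarrow> nat \<Rightarrow> 'k::field) (idm (dimN K \<alpha>))"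
proof -
  have "mmul N (idm N) (idm N) = (idm N :: nat \<Rightarrow> nat \<Rightarrow> 'k)" for N
    by (auto simp: fun_eq_iff mmul_def idm_def if_distrib[of "\<lambda>x. x * _"] sum.delta cong: if_cong)
  then show ?thesis
    by (auto simp: in_GLalpha_def in_galpha_def idm_def intro: sameblock_refl)
qed

lemma cartan_comp_Adm:
  fixes g h :: "nat \<Rightarrow> nat \<Rightarrow> 'k::field_char_0"
  assumes "in_GLalpha K \<alpha> g h"
  shows "cartan_comp K \<alpha> (Adm (dimN K \<alpha>) g h) = cartan_comp K \<alpha> id"
proof -
  let ?N = "dimN K \<alpha>"
  have "cartan_comp K \<alpha> (Adm ?N g h) = cartan_comp K \<alpha> (Adm ?N (idm ?N) (idm ?N))"
    using assms in_GLalpha_idm[of K \<alpha>, where 'k = 'k]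
    by (simp only: fun_eq_iff cartan_comp_eq_cyclic_sums cyclic_sum_Adm simp_thms)
  also have "\<dots> = cartan_comp K \<alpha> id"
    by (rule cartan_comp_cong) (simp add: fun_eq_iff Adm_Emat, simp add: idm_def Emat_def)
  finally show ?thesis .
qed

lemma wedge3_rotate: "wedge3 (\<lambda>x y z. F z x y) a b c = wedge3 F a b c"
  by (simp add: wedge3_def algebra_simps)

lemma cartan_eval_linear:
  fixes emb :: "'k::field \<Rightarrow> 'r::comm_ring_1"
  shows "cartan_eval K \<alpha> (\<lambda>x y z. F x y z * t + t' * G x y z) emb
    = cartan_eval K \<alpha> F emb * t + t' * cartan_eval K \<alpha> G emb"
proof -
  have "wedge3 (\<lambda>x y z. F x y z * t + t' * G x y z) a b c = wedge3 F a b c * t + t' * wedge3 G a b c" for a b c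
    by (simp add: wedge3_def algebra_simps)
  then show ?thesis
    by (simp add: cartan_eval_def algebra_simps sum.distrib sum_distrib_left sum_distrib_right)
qed

section \<open>Congruence modulo the relations of R\<close>

locale rep_quasi_Poisson =
  fixes sm :: "'k::field_char_0 \<Rightarrow> 'a::ring \<Rightarrow> 'a" and K :: nat and e :: "nat \<Rightarrow> 'a"
    and dbr :: "'a \<Rightarrow> 'a \<Rightarrow> ('a \<times> 'a) list" and \<alpha> :: "nat \<Rightarrow> nat"
  assumes dqP: "double_quasi_Poisson sm K e dbr"
begin

abbreviation N where "N \<equiv> dimN K \<alpha>"

abbreviation I :: "('a, 'k) rpoly set" where "I \<equiv> Irel sm K e \<alpha>"

abbreviation req_R :: "('a, 'k) rpoly \<Rightarrow> ('a, 'k) rpoly \<Rightarrow> bool" (infix "\<simeq>" 50)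
  where "p \<simeq> q \<equiv> req sm K e \<alpha> p q"

lemma I_zero [simp]: "0 \<in> I"
  by (simp add: Irel_def igen.igen_zero)

lemma I_add: "p \<in> I \<Longrightarrow> q \<in> I \<Longrightarrow> p + q \<in> I"
  by (simp add: Irel_def igen_add)

lemma I_mult_left: "p \<in> I \<Longrightarrow> s * p \<in> I"
  by (simp add: Irel_def igen_mult_left)

lemma I_mult_right: "p \<in> I \<Longrightarrow> p * s \<in> I"
  using I_mult_left[of p s] by (simp add: mult.commute)

lemma I_uminus: "p \<in> I \<Longrightarrow> - p \<in> I"
  using I_mult_left[of p "- 1"] by simp

lemma I_sum: "(\<And>i. i \<in> S \<Longrightarrow> f i \<in> I) \<Longrightarrow> (\<Sum>i\<in>S. f i) \<in> I"
  by (induction S rule: infinite_finite_induct) (auto intro: I_add)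

lemma I_relation: "g \<in> Rrels sm K e \<alpha> \<Longrightarrow> g \<in> I"
  by (simp add: Irel_def igen_base)

lemma req_iff: "p \<simeq> q \<longleftrightarrow> p - q \<in> I"
  by (simp add: req_def)

lemma req_refl [simp, intro]: "p \<simeq> p"
  by (simp add: req_def)

lemma req_sym: "p \<simeq> q \<Longrightarrow> q \<simeq> p"
  unfolding req_iff using I_uminus[of "p - q"] by simp

lemma req_trans [trans]: "p \<simeq> q \<Longrightarrow> q \<simeq> r \<Longrightarrow> p \<simeq> r"
  unfolding req_iff using I_add[of "p - q" "q - r"] by simp

lemma req_trans_eq_left [trans]: "p = q \<Longrightarrow> q \<simeq> r \<Longrightarrow> p \<simeq> r"
  by simp

lemma req_trans_eq_right [trans]: "p \<simeq> q \<Longrightarrow> q = r \<Longrightarrow> p \<simeq> r"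
  by simp

lemma req_zero_iff: "p \<simeq> 0 \<longleftrightarrow> p \<in> I"
  by (simp add: req_def)

lemma req_add: "p \<simeq> p' \<Longrightarrow> q \<simeq> q' \<Longrightarrow> p + q \<simeq> p' + q'"
  unfolding req_iff using I_add[of "p - p'" "q - q'"] by (simp add: algebra_simps)

lemma req_uminus: "p \<simeq> p' \<Longrightarrow> - p \<simeq> - p'"
  unfolding req_iff using I_uminus[of "p - p'"] by (simp add: algebra_simps)

lemma req_diff: "p \<simeq> p' \<Longrightarrow> q \<simeq> q' \<Longrightarrow> p - q \<simeq> p' - q'"
  using req_add[of p p' "- q" "- q'"] req_uminus[of q q'] by simp

lemma req_mult: "p \<simeq> p' \<Longrightarrow> q \<simeq> q' \<Longrightarrow> p * q \<simeq> p' * q'"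
proof -
  assume "p \<simeq> p'" "q \<simeq> q'"
  moreover have "p * q - p' * q' = (p - p') * q + p' * (q - q')"
    by (simp add: algebra_simps)
  ultimately show ?thesis
    unfolding req_iff by (metis I_add I_mult_left I_mult_right)
qed

lemma req_sum: "(\<And>i. i \<in> S \<Longrightarrow> f i \<simeq> g i) \<Longrightarrow> (\<Sum>i\<in>S. f i) \<simeq> (\<Sum>i\<in>S. g i)"
  by (induction S rule: infinite_finite_induct) (auto intro: req_add)

lemma req_sum_list: "(\<And>x. x \<in> set xs \<Longrightarrow> f x \<simeq> g x) \<Longrightarrow> (\<Sum>x\<leftarrow>xs. f x) \<simeq> (\<Sum>x\<leftarrow>xs. g x)"
  by (induction xs) (auto intro: req_add)

lemma A_Balgebra: "Balgebra sm K e"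
  and dbr_double_bracket: "double_bracket sm K e dbr"
  and dbr_triple_bracket: "teq3 sm (triple_bracket dbr a b c) (qP_rhs sm K e a b c)"
  using dqP by (auto simp: double_quasi_Poisson_def)

lemma sm_add_left: "sm (c + d) x = sm c x + sm d x"
  and sm_one: "sm 1 x = x"
  and sm_mult_left: "sm c (x * y) = sm c x * y"
  and sm_mult_right: "sm c (x * y) = x * sm c y"
  using A_Balgebra unfolding Balgebra_def kalgebra_def by blast+

lemma sm_zero: "sm 0 x = 0"
  using sm_add_left[of 0 0 x] by simp

lemma relation_add: "i < N \<Longrightarrow> j < N \<Longrightarrow> Xv (x + y) i j - Xv x i j - Xv y i j \<in> I"
  and relation_smult: "i < N \<Longrightarrow> j < N \<Longrightarrow> Xv (sm c x) i j - cst c * Xv x i j \<in> I"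
  and relation_mult: "i < N \<Longrightarrow> j < N \<Longrightarrow> Xv (x * y) i j - (\<Sum>m<N. Xv x i m * Xv y m j) \<in> I"
  and relation_idempotent: "s < K \<Longrightarrow> i < N \<Longrightarrow> j < N \<Longrightarrow> Xv (e s) i j - cst (eblk \<alpha> s i j) \<in> I"
  and Xv_outside: "\<not> (i < N \<and> j < N) \<Longrightarrow> Xv x i j \<in> I"
  by (rule I_relation, unfold Rrels_def Let_def, blast)+

lemma Xv_outside_req: "\<not> (i < N \<and> j < N) \<Longrightarrow> Xv x i j \<simeq> 0"
  using Xv_outside req_zero_iff by blast

lemma Xv_add: "Xv (x + y) i j \<simeq> Xv x i j + Xv y i j"
proof (cases "i < N \<and> j < N")
  case True
  then have "Xv (x + y) i j - Xv x i j - Xv y i j \<in> I"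
    by (simp add: relation_add)
  then show ?thesis by (simp add: req_iff diff_diff_eq)
next
  case False
  then have "Xv x i j + Xv y i j \<simeq> 0"
    using req_add[OF Xv_outside_req Xv_outside_req] by simp
  with False show ?thesis
    using Xv_outside_req req_sym req_trans by blast
qed

lemma Xv_smult: "Xv (sm c x) i j \<simeq> cst c * Xv x i j"
proof (cases "i < N \<and> j < N")
  case True
  then have "Xv (sm c x) i j - cst c * Xv x i j \<in> I"
    by (simp add: relation_smult)
  then show ?thesis by (simp add: req_iff)
next
  case False
  then have "cst c * Xv x i j \<simeq> 0"
    using req_mult[OF req_refl Xv_outside_req, of i j "cst c"] by simp
  with False show ?thesis
    using Xv_outside_req req_sym req_trans by blast
qed

lemma Xv_mult: "Xv (x * y) i j \<simeq> (\<Sum>m<N. Xv x i m * Xv y m j)"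
proof (cases "i < N \<and> j < N")
  case True
  then have "Xv (x * y) i j - (\<Sum>m<N. Xv x i m * Xv y m j) \<in> I"
    by (simp add: relation_mult)
  then show ?thesis by (simp add: req_iff)
next
  case False
  then have "Xv x i m * Xv y m j \<in> I" for m
    using Xv_outside[of i m x] Xv_outside[of m j y] by (auto intro: I_mult_left I_mult_right)
  then have "(\<Sum>m<N. Xv x i m * Xv y m j) \<simeq> 0"
    by (simp add: req_zero_iff I_sum)
  with False show ?thesis
    using Xv_outside_req req_sym req_trans by blast
qed

lemma Xv_idempotent: "s < K \<Longrightarrow> Xv (e s) i j \<simeq> cst (eblk \<alpha> s i j)"
proof (cases "i < N \<and> j < N")
  case True
  assume "s < K"
  with True have "Xv (e s) i j - cst (eblk \<alpha> s i j) \<in> I"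
    by (simp add: relation_idempotent)
  then show ?thesis by (simp add: req_iff)
next
  case False
  assume "s < K"
  with False have "eblk \<alpha> s i j = (0::'k)"
    using inblock_less_dimN by (auto simp: eblk_def)
  with False show ?thesis
    using Xv_outside_req by simp
qed

definition R_linear :: "('a \<Rightarrow> ('a, 'k) rpoly) \<Rightarrow> bool" where
  "R_linear f \<longleftrightarrow> (\<forall>x y. f (x + y) \<simeq> f x + f y) \<and> (\<forall>c x. f (sm c x) \<simeq> cst c * f x)"

lemma R_linearD:
  "R_linear f \<Longrightarrow> f (x + y) \<simeq> f x + f y"
  "R_linear f \<Longrightarrow> f (sm c x) \<simeq> cst c * f x"
  by (auto simp: R_linear_def)

lemma R_linearI:
  "(\<And>x y. f (x + y) \<simeq> f x + f y) \<Longrightarrow> (\<And>c x. f (sm c x) \<simeq> cst c * f x) \<Longrightarrow> R_linear f"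
  by (auto simp: R_linear_def)

lemma R_linear_Xv: "R_linear (\<lambda>x. Xv x i j)"
  by (intro R_linearI Xv_add Xv_smult)

lemma R_linear_mult_right: "R_linear f \<Longrightarrow> R_linear (\<lambda>v. f (v * y))"
  by (intro R_linearI)
    (use R_linearD[of f] in \<open>simp_all add: distrib_right sm_mult_left[symmetric]\<close>)

lemma R_linear_mult_left: "R_linear f \<Longrightarrow> R_linear (\<lambda>v. f (y * v))"
  by (intro R_linearI)
    (use R_linearD[of f] in \<open>simp_all add: distrib_left sm_mult_right[symmetric]\<close>)

lemma lin_ext_kspan:
  assumes "\<And>s. s \<in> S \<Longrightarrow> lin_ext h s \<in> I" and "p \<in> kspan S"
  shows "lin_ext h p \<in> I"
  using assms(2)
proof (induction p rule: kspan.induct)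
  case (kspan_step s p c)
  then show ?case
    using assms(1) by (simp add: lin_ext_add lin_ext_scale I_add I_mult_left)
qed simp

lemma lin_ext_fsum: "lin_ext h (fsum L) = (\<Sum>x\<leftarrow>L. h x)"
  by (induction L) (simp_all add: fsum_def lin_ext_add)

lemma lin_ext_Rel2:
  assumes f: "R_linear f" and g: "R_linear g" and s: "s \<in> Rel2 sm"
  shows "lin_ext (\<lambda>(x, y). f x * g y) s \<in> I"
  using s unfolding Rel2_def
proof (elim UnE CollectE exE conjE)
  fix x x' y
  assume s: "s = Poly_Mapping.single (x + x', y) 1 - Poly_Mapping.single (x, y) 1 - Poly_Mapping.single (x', y) 1"
  show ?thesis
    unfolding s using I_mult_right[OF R_linearD(1)[OF f, of x x', unfolded req_iff], of "g y"]
    by (simp add: lin_ext_diff lin_ext_add algebra_simps)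
next
  fix x y y'
  assume s: "s = Poly_Mapping.single (x, y + y') 1 - Poly_Mapping.single (x, y) 1 - Poly_Mapping.single (x, y') 1"
  show ?thesis
    unfolding s using I_mult_right[OF R_linearD(1)[OF g, of y y', unfolded req_iff], of "f x"]
    by (simp add: lin_ext_diff lin_ext_add algebra_simps)
next
  fix c x y
  assume s: "s = Poly_Mapping.single (sm c x, y) 1 - Poly_Mapping.single (x, y) c"
  show ?thesis
    unfolding s using I_mult_right[OF R_linearD(2)[OF f, of c x, unfolded req_iff], of "g y"]
    by (simp add: lin_ext_diff cst_def algebra_simps)
next
  fix c x y
  assume s: "s = Poly_Mapping.single (x, sm c y) 1 - Poly_Mapping.single (x, y) c"
  show ?thesis
    unfolding s using I_mult_right[OF R_linearD(2)[OF g, of c y, unfolded req_iff], of "f x"]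
    by (simp add: lin_ext_diff cst_def algebra_simps)
qed

lemma lin_ext_Rel3:
  assumes f: "R_linear f" and g: "R_linear g" and h: "R_linear h" and s: "s \<in> Rel3 sm"
  shows "lin_ext (\<lambda>(x, y, z). f x * g y * h z) s \<in> I"
  using s unfolding Rel3_def
proof (elim UnE CollectE exE conjE)
  fix x x' y z
  assume s: "s = Poly_Mapping.single (x + x', y, z) 1 - Poly_Mapping.single (x, y, z) 1 - Poly_Mapping.single (x', y, z) 1"
  show ?thesis
    unfolding s using I_mult_right[OF R_linearD(1)[OF f, of x x', unfolded req_iff], of "g y * h z"]
    by (simp add: lin_ext_diff lin_ext_add algebra_simps)
next
  fix x y y' z
  assume s: "s = Poly_Mapping.single (x, y + y', z) 1 - Poly_Mapping.single (x, y, z) 1 - Poly_Mapping.single (x, y', z) 1"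
  show ?thesis
    unfolding s using I_mult_right[OF R_linearD(1)[OF g, of y y', unfolded req_iff], of "f x * h z"]
    by (simp add: lin_ext_diff lin_ext_add algebra_simps)
next
  fix x y z z'
  assume s: "s = Poly_Mapping.single (x, y, z + z') 1 - Poly_Mapping.single (x, y, z) 1 - Poly_Mapping.single (x, y, z') 1"
  show ?thesis
    unfolding s using I_mult_right[OF R_linearD(1)[OF h, of z z', unfolded req_iff], of "f x * g y"]
    by (simp add: lin_ext_diff lin_ext_add algebra_simps)
next
  fix c x y z
  assume s: "s = Poly_Mapping.single (sm c x, y, z) 1 - Poly_Mapping.single (x, y, z) c"
  show ?thesis
    unfolding s using I_mult_right[OF R_linearD(2)[OF f, of c x, unfolded req_iff], of "g y * h z"]
    by (simp add: lin_ext_diff cst_def algebra_simps)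
next
  fix c x y z
  assume s: "s = Poly_Mapping.single (x, sm c y, z) 1 - Poly_Mapping.single (x, y, z) c"
  show ?thesis
    unfolding s using I_mult_right[OF R_linearD(2)[OF g, of c y, unfolded req_iff], of "f x * h z"]
    by (simp add: lin_ext_diff cst_def algebra_simps)
next
  fix c x y z
  assume s: "s = Poly_Mapping.single (x, y, sm c z) 1 - Poly_Mapping.single (x, y, z) c"
  show ?thesis
    unfolding s using I_mult_right[OF R_linearD(2)[OF h, of c z, unfolded req_iff], of "f x * g y"]
    by (simp add: lin_ext_diff cst_def algebra_simps)
qed

lemma eval2_teq2:
  assumes "R_linear f" "R_linear g" and "teq2 sm L M"
  shows "eval2 f g L \<simeq> eval2 f g M"
proof -
  have "lin_ext (\<lambda>(x, y). f x * g y) (fsum L - fsum M) \<in> I"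
    using lin_ext_Rel2[OF assms(1,2)] assms(3) unfolding teq2_def by (rule lin_ext_kspan)
  then show ?thesis
    by (simp add: lin_ext_diff lin_ext_fsum req_iff eval2_def)
qed

lemma eval3_teq3:
  assumes "R_linear f" "R_linear g" "R_linear h" and "teq3 sm L M"
  shows "eval3 f g h L \<simeq> eval3 f g h M"
proof -
  have "lin_ext (\<lambda>(x, y, z). f x * g y * h z) (fsum L - fsum M) \<in> I"
    using lin_ext_Rel3[OF assms(1-3)] assms(4) unfolding teq3_def by (rule lin_ext_kspan)
  then show ?thesis
    by (simp add: lin_ext_diff lin_ext_fsum req_iff eval3_def)
qed

lemma eval2_cong: "(\<And>x. f x \<simeq> f' x) \<Longrightarrow> (\<And>y. g y \<simeq> g' y) \<Longrightarrow> eval2 f g L \<simeq> eval2 f' g' L"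
  unfolding eval2_def by (rule req_sum_list) (auto intro: req_mult)

lemma eval2_zero_left: "(\<And>x. f x \<simeq> 0) \<Longrightarrow> eval2 f g L \<simeq> 0"
proof -
  assume "\<And>x. f x \<simeq> 0"
  then have "eval2 f g L \<simeq> eval2 (\<lambda>x. 0) g L"
    by (intro eval2_cong) auto
  also have "eval2 (\<lambda>x. 0) g L = 0"
    by (induction L) auto
  finally show ?thesis .
qed

lemma eval2_zero_right: "(\<And>y. g y \<simeq> 0) \<Longrightarrow> eval2 f g L \<simeq> 0"
proof -
  assume "\<And>y. g y \<simeq> 0"
  then have "eval2 f g L \<simeq> eval2 f (\<lambda>y. 0) L"
    by (intro eval2_cong) auto
  also have "eval2 f (\<lambda>y. 0) L = 0"
    by (induction L) auto
  finally show ?thesis .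
qed

lemma eval2_smult_left:
  assumes "R_linear f"
  shows "eval2 f g (map (\<lambda>(u, v). (sm c u, v)) L) \<simeq> cst c * eval2 f g L"
proof -
  have "eval2 f g (map (\<lambda>(u, v). (sm c u, v)) L) \<simeq> eval2 (\<lambda>u. cst c * f u) g L"
    unfolding eval2_map_left by (rule eval2_cong) (simp_all add: R_linearD(2)[OF assms])
  then show ?thesis
    by (simp only: eval2_cmult_left)
qed

lemma double_bracket_props:
  "teq2 sm (dbr (x + x') y) (dbr x y @ dbr x' y)"
  "teq2 sm (dbr x (y + y')) (dbr x y @ dbr x y')"
  "teq2 sm (dbr (sm c x) y) (map (\<lambda>(u, v). (sm c u, v)) (dbr x y))"
  "teq2 sm (dbr x (sm c y)) (map (\<lambda>(u, v). (sm c u, v)) (dbr x y))"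
  "teq2 sm (dbr a b) (map (\<lambda>(u, v). (sm (- 1) v, u)) (dbr b a))"
  "teq2 sm (dbr a (b * d)) (map (\<lambda>(u, v). (u, v * d)) (dbr a b) @ map (\<lambda>(u, v). (b * u, v)) (dbr a d))"
  "inB sm K e b \<Longrightarrow> teq2 sm (dbr b x) []"
  using dbr_double_bracket by (simp_all add: double_bracket_def)

lemma inB_idempotent: "s < K \<Longrightarrow> inB sm K e (e s)"
proof -
  assume "s < K"
  then have "(\<Sum>t<K. sm (if t = s then 1 else 0) (e t)) = e s"
    by (simp add: if_distrib[of "\<lambda>c. sm c _"] sm_zero sm_one cong: if_cong)
  then show ?thesis
    unfolding inB_def by metis
qed

context
  fixes f g :: "'a \<Rightarrow> ('a, 'k) rpoly"
  assumes f: "R_linear f" and g: "R_linear g"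
begin

lemma eval2_dbr_swap: "eval2 f g (dbr a b) \<simeq> - eval2 g f (dbr b a)"
proof -
  have "eval2 f g (dbr a b) \<simeq> eval2 g (\<lambda>v. f (sm (- 1) v)) (dbr b a)"
    using eval2_teq2[OF f g double_bracket_props(5)] by (simp add: eval2_map_swap)
  also have "\<dots> \<simeq> eval2 g (\<lambda>v. - 1 * f v) (dbr b a)"
    by (rule eval2_cong) (use R_linearD(2)[OF f, of "- 1"] in \<open>simp_all add: cst_uminus\<close>)
  finally show ?thesis
    by (simp only: eval2_cmult_right) simp
qed

lemma R_linear_eval2_dbr_left: "R_linear (\<lambda>a. eval2 f g (dbr a b))"
proof (rule R_linearI)
  show "eval2 f g (dbr (x + y) b) \<simeq> eval2 f g (dbr x b) + eval2 f g (dbr y b)" for x y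
    using eval2_teq2[OF f g double_bracket_props(1)] by simp
  show "eval2 f g (dbr (sm c x) b) \<simeq> cst c * eval2 f g (dbr x b)" for c x
    using eval2_teq2[OF f g double_bracket_props(3)] eval2_smult_left[OF f] by (rule req_trans)
qed

lemma R_linear_eval2_dbr_right: "R_linear (\<lambda>b. eval2 f g (dbr a b))"
proof (rule R_linearI)
  show "eval2 f g (dbr a (x + y)) \<simeq> eval2 f g (dbr a x) + eval2 f g (dbr a y)" for x y
    using eval2_teq2[OF f g double_bracket_props(2)] by simp
  show "eval2 f g (dbr a (sm c x)) \<simeq> cst c * eval2 f g (dbr a x)" for c x
    using eval2_teq2[OF f g double_bracket_props(4)] eval2_smult_left[OF f] by (rule req_trans)
qed

lemma eval2_dbr_mult_right:
  "eval2 f g (dbr a (b * c)) \<simeq> eval2 f (\<lambda>v. g (v * c)) (dbr a b) + eval2 (\<lambda>u. f (b * u)) g (dbr a c)"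
  using eval2_teq2[OF f g double_bracket_props(6)] by (simp add: eval2_map_left eval2_map_right)

lemma eval2_dbr_idempotent: "s < K \<Longrightarrow> eval2 f g (dbr (e s) x) \<simeq> 0"
  using eval2_teq2[OF f g double_bracket_props(7)[OF inB_idempotent]] by simp

end

lemma eval2_dbr_mult_left:
  assumes f: "R_linear f" and g: "R_linear g"
  shows "eval2 f g (dbr (x * y) b) \<simeq> eval2 (\<lambda>v. f (v * y)) g (dbr x b) + eval2 f (\<lambda>u. g (x * u)) (dbr y b)"
proof -
  have "eval2 f g (dbr (x * y) b) \<simeq> - eval2 g f (dbr b (x * y))"
    by (rule eval2_dbr_swap[OF f g])
  also have "\<dots> \<simeq> - (eval2 g (\<lambda>v. f (v * y)) (dbr b x) + eval2 (\<lambda>u. g (x * u)) f (dbr b y))"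
    by (rule req_uminus[OF eval2_dbr_mult_right[OF g f]])
  also have "\<dots> \<simeq> eval2 (\<lambda>v. f (v * y)) g (dbr x b) + eval2 f (\<lambda>u. g (x * u)) (dbr y b)"
    using req_add[OF req_sym[OF eval2_dbr_swap[OF R_linear_mult_right[OF f, of y] g, of x b]]
        req_sym[OF eval2_dbr_swap[OF f R_linear_mult_left[OF g, of x], of y b]]]
    by simp
  finally show ?thesis .
qed

section \<open>The induced bracket\<close>

definition bracket :: "('a, 'k) rpoly \<Rightarrow> ('a, 'k) rpoly \<Rightarrow> ('a, 'k) rpoly" where
  "bracket p q = pder (\<lambda>(a, i, j). pder (\<lambda>(b, k, l). ind_br dbr a b i j k l) q) p"

lemma bracket_add_left: "bracket (p + q) r = bracket p r + bracket q r"
  by (simp add: bracket_def pder_add)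

lemma bracket_add_right: "bracket p (q + r) = bracket p q + bracket p r"
  by (simp add: bracket_def pder_add case_prod_unfold pder_fun_add)

lemma bracket_mult_left: "bracket (p * q) r = bracket p r * q + p * bracket q r"
  by (simp add: bracket_def pder_mult)

lemma bracket_mult_right: "bracket p (q * r) = bracket p q * r + q * bracket p r"
  by (simp add: bracket_def pder_mult case_prod_unfold pder_fun_add pder_fun_mult_right pder_fun_mult_left)

lemma bracket_cst_left [simp]: "bracket (cst c) q = 0"
  by (simp add: bracket_def cst_def)

lemma bracket_cst_right [simp]: "bracket p (cst c) = 0"
  by (simp add: bracket_def cst_def case_prod_unfold)

lemma bracket_zero_left [simp]: "bracket 0 q = 0"
  using bracket_cst_left[of 0 q] by simp

lemma bracket_zero_right [simp]: "bracket p 0 = 0"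
  using bracket_cst_right[of p 0] by simp

lemma bracket_Xv_Xv: "bracket (Xv a i j) (Xv b k l) = ind_br dbr a b i j k l"
  unfolding bracket_def Xv_def pder_var by simp

lemma bracket_diff_left: "bracket (p - q) r = bracket p r - bracket q r"
  by (simp add: bracket_def pder_diff)

lemma bracket_diff_right: "bracket p (q - r) = bracket p q - bracket p r"
  using bracket_add_right[of p "q - r" r] by simp

lemma bracket_sum_left: "bracket (\<Sum>i\<in>S. f i) q = (\<Sum>i\<in>S. bracket (f i) q)"
  by (induction S rule: infinite_finite_induct) (simp_all add: bracket_add_left)

lemma bracket_sum_right: "bracket p (\<Sum>i\<in>S. f i) = (\<Sum>i\<in>S. bracket p (f i))"
  by (induction S rule: infinite_finite_induct) (simp_all add: bracket_add_right)

lemma bracket_eval2_right: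
  "bracket p (eval2 f g L) = eval2 (\<lambda>x. bracket p (f x)) g L + eval2 f (\<lambda>y. bracket p (g y)) L"
  by (induction L) (auto simp: bracket_add_right bracket_mult_right algebra_simps)

lemma ind_br_eq_eval2: "ind_br dbr a b i j k l = eval2 (\<lambda>x. Xv x k j) (\<lambda>y. Xv y i l) (dbr a b)"
  by (simp add: ind_br_def eval2_def)

lemma twisted_derivation_into_I:
  assumes add: "\<And>p q. D (p + q) = D p + D q"
    and leibniz: "\<And>p q. D (p * q) - (D p * \<phi> q + \<psi> p * D q) \<in> I"
    and cst: "\<And>c. D (cst c) \<in> I" and var: "\<And>a i j. D (Xv a i j) \<in> I"
  shows "D p \<in> I"
proof (induction p rule: rpoly_induct)
  case (mult p q)
  have "D (p * q) = (D (p * q) - (D p * \<phi> q + \<psi> p * D q)) + D p * \<phi> q + \<psi> p * D q"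
    by simp
  with mult.IH show ?case
    using leibniz[of p q] by (metis I_add I_mult_left I_mult_right)
qed (use add cst var I_add in auto)

lemma derivation_into_I:
  assumes "\<And>p q. D (p + q) = D p + D q"
    and "\<And>p q. D (p * q) - (D p * q + p * D q) \<in> I"
    and "\<And>c. D (cst c) \<in> I" and "\<And>a i j. D (Xv a i j) \<in> I"
  shows "D p \<in> I"
  using twisted_derivation_into_I[where \<phi> = id and \<psi> = id] assms by simp

lemma ind_br_swap: "ind_br dbr a b i j k l \<simeq> - ind_br dbr b a k l i j"
  unfolding ind_br_eq_eval2 by (rule eval2_dbr_swap[OF R_linear_Xv R_linear_Xv])

lemma bracket_swap_I: "bracket p q + bracket q p \<in> I"
proof -
  have Xv_left: "bracket (Xv a i j) q + bracket q (Xv a i j) \<in> I" for a i j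
    by (rule derivation_into_I[where D = "\<lambda>q. bracket (Xv a i j) q + bracket q (Xv a i j)"])
      (use ind_br_swap in \<open>auto simp: bracket_Xv_Xv bracket_add_left bracket_add_right
        bracket_mult_left bracket_mult_right req_iff algebra_simps\<close>)
  show ?thesis
    by (rule derivation_into_I[where D = "\<lambda>p. bracket p q + bracket q p"])
      (use Xv_left in \<open>auto simp: bracket_add_left bracket_add_right bracket_mult_left
        bracket_mult_right algebra_simps\<close>)
qed

lemma bracket_swap: "bracket p q \<simeq> - bracket q p"
  using bracket_swap_I[of p q] by (simp add: req_iff)

lemma ind_br_mult_left: "ind_br dbr (x * y) b i j k l \<simeq> bracket (\<Sum>m<N. Xv x i m * Xv y m j) (Xv b k l)"
proof -
  have "ind_br dbr (x * y) b i j k l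
      \<simeq> eval2 (\<lambda>u. Xv (u * y) k j) (\<lambda>v. Xv v i l) (dbr x b) + eval2 (\<lambda>u. Xv u k j) (\<lambda>v. Xv (x * v) i l) (dbr y b)"
    unfolding ind_br_eq_eval2 by (rule eval2_dbr_mult_left[OF R_linear_Xv R_linear_Xv])
  also have "\<dots> \<simeq> eval2 (\<lambda>u. \<Sum>m<N. Xv u k m * Xv y m j) (\<lambda>v. Xv v i l) (dbr x b)
      + eval2 (\<lambda>u. Xv u k j) (\<lambda>v. \<Sum>m<N. Xv x i m * Xv v m l) (dbr y b)"
    by (intro req_add eval2_cong Xv_mult req_refl)
  also have "\<dots> = bracket (\<Sum>m<N. Xv x i m * Xv y m j) (Xv b k l)"
    by (simp add: eval2_sum_left eval2_sum_right eval2_multc_left eval2_cmult_right ind_br_eq_eval2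
        bracket_sum_left bracket_mult_left bracket_Xv_Xv sum.distrib)
  finally show ?thesis .
qed

lemma bracket_relation_Xv:
  assumes "g \<in> Rrels sm K e \<alpha>"
  shows "bracket g (Xv b k l) \<in> I"
  using assms unfolding Rrels_def Let_def
proof (elim UnE CollectE exE conjE)
  fix x y i j
  assume g: "g = Xv (x + y) i j - Xv x i j - Xv y i j"
  have "ind_br dbr (x + y) b i j k l \<simeq> ind_br dbr x b i j k l + ind_br dbr y b i j k l"
    unfolding ind_br_eq_eval2 by (rule R_linearD(1)[OF R_linear_eval2_dbr_left[OF R_linear_Xv R_linear_Xv]])
  then show ?thesis
    by (simp add: g bracket_diff_left bracket_add_left bracket_Xv_Xv req_iff diff_diff_eq)
next
  fix c x i j
  assume g: "g = Xv (sm c x) i j - cst c * Xv x i j"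
  have "ind_br dbr (sm c x) b i j k l \<simeq> cst c * ind_br dbr x b i j k l"
    unfolding ind_br_eq_eval2 by (rule R_linearD(2)[OF R_linear_eval2_dbr_left[OF R_linear_Xv R_linear_Xv]])
  then show ?thesis
    by (simp add: g bracket_diff_left bracket_Xv_Xv bracket_mult_left req_iff)
next
  fix x y i j
  assume g: "g = Xv (x * y) i j - (\<Sum>m<N. Xv x i m * Xv y m j)"
  show ?thesis
    using ind_br_mult_left[of x y b i j k l] by (simp add: g bracket_diff_left bracket_Xv_Xv req_iff)
next
  fix s i j
  assume g: "g = Xv (e s) i j - cst (eblk \<alpha> s i j)" and "s < K"
  then have "ind_br dbr (e s) b i j k l \<simeq> 0"
    unfolding ind_br_eq_eval2 by (intro eval2_dbr_idempotent R_linear_Xv)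
  then show ?thesis
    by (simp add: g bracket_diff_left bracket_Xv_Xv req_iff)
next
  fix x i j
  assume g: "g = Xv x i j" and ij: "\<not> (i < N \<and> j < N)"
  have "ind_br dbr x b i j k l \<simeq> 0"
    unfolding ind_br_eq_eval2 using ij Xv_outside_req
    by (cases "j < N") (auto intro: eval2_zero_left eval2_zero_right)
  then show ?thesis
    by (simp add: g bracket_Xv_Xv req_iff)
qed

lemma bracket_I_left: "p \<in> I \<Longrightarrow> bracket p q \<in> I"
  unfolding Irel_def
proof (induction p rule: igen.induct)
  case (igen_step g p r)
  have "bracket g q \<in> I"
    by (rule derivation_into_I[where D = "bracket g"])
      (use igen_step(1) in \<open>auto simp: bracket_relation_Xv bracket_add_right bracket_mult_right\<close>)
  moreover have "g \<in> I"
    using igen_step(1) by (rule I_relation)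
  ultimately show ?case
    using igen_step(3) by (simp add: bracket_add_left bracket_mult_left I_add I_mult_left I_mult_right flip: Irel_def)
qed (simp flip: Irel_def)

lemma bracket_I_right: "q \<in> I \<Longrightarrow> bracket p q \<in> I"
  using bracket_I_left[of q p] bracket_swap[of p q] I_uminus
  by (metis req_iff add.commute diff_add_cancel I_add)

lemma bracket_cong: "p \<simeq> p' \<Longrightarrow> q \<simeq> q' \<Longrightarrow> bracket p q \<simeq> bracket p' q'"
proof -
  assume "p \<simeq> p'" "q \<simeq> q'"
  moreover have "bracket p q - bracket p' q' = bracket (p - p') q + bracket p' (q - q')"
    by (simp add: bracket_diff_left bracket_diff_right)
  ultimately show ?thesis
    unfolding req_iff by (metis I_add bracket_I_left bracket_I_right)
qed

section \<open>Invariance under g_alpha and GL_alpha\<close>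

lemma etaR_add: "etaR K \<alpha> \<eta> (p + q) = etaR K \<alpha> \<eta> p + etaR K \<alpha> \<eta> q"
  by (simp add: etaR_def pder_add)

lemma etaR_mult: "etaR K \<alpha> \<eta> (p * q) = etaR K \<alpha> \<eta> p * q + p * etaR K \<alpha> \<eta> q"
  by (simp add: etaR_def pder_mult)

lemma etaR_cst [simp]: "etaR K \<alpha> \<eta> (cst c) = 0"
  by (simp add: etaR_def cst_def)

lemma etaR_zero [simp]: "etaR K \<alpha> \<eta> 0 = 0"
  using etaR_cst[of \<eta> 0] by simp

lemma etaR_Xv: "etaR K \<alpha> \<eta> (Xv a i j) = (if i < N \<and> j < N then
    (\<Sum>m<N. Xv a i m * cst (\<eta> m j) - cst (\<eta> i m) * Xv a m j) else 0)"
  unfolding etaR_def Xv_def pder_var by (simp add: Let_def Xv_def)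

lemma etaR_Xv_req:
  assumes "in_galpha K \<alpha> \<eta>"
  shows "etaR K \<alpha> \<eta> (Xv a i j) \<simeq> (\<Sum>m<N. Xv a i m * cst (\<eta> m j) - cst (\<eta> i m) * Xv a m j)"
proof (cases "i < N \<and> j < N")
  case False
  have "Xv a i m * cst (\<eta> m j) - cst (\<eta> i m) * Xv a m j \<in> I" for m
  proof (cases "i < N")
    case True
    with False assms have "\<eta> m j = 0"
      by (auto simp: in_galpha_def)
    with True False show ?thesis
      using Xv_outside[of m j a] by (simp add: I_uminus I_mult_left)
  next
    case False
    with assms have "\<eta> i m = 0"
      by (auto simp: in_galpha_def)
    with False show ?thesis
      using Xv_outside[of i m a] by (simp add: I_mult_right)
  qed
  then have "(\<Sum>m<N. Xv a i m * cst (\<eta> m j) - cst (\<eta> i m) * Xv a m j) \<simeq> 0"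
    by (simp add: req_zero_iff I_sum)
  with False show ?thesis
    by (simp add: etaR_Xv req_sym)
qed (simp add: etaR_Xv)

lemma etaR_eval2:
  "etaR K \<alpha> \<eta> (eval2 f g L) = eval2 (\<lambda>u. etaR K \<alpha> \<eta> (f u)) g L + eval2 f (\<lambda>v. etaR K \<alpha> \<eta> (g v)) L"
  by (induction L) (auto simp: etaR_add etaR_mult)

lemma etaR_ind_br:
  assumes \<eta>: "in_galpha K \<alpha> \<eta>"
  shows "etaR K \<alpha> \<eta> (ind_br dbr a b i j k l)
    \<simeq> bracket (etaR K \<alpha> \<eta> (Xv a i j)) (Xv b k l) + bracket (Xv a i j) (etaR K \<alpha> \<eta> (Xv b k l))"
proof -
  let ?E = "\<lambda>a i j. \<Sum>m<N. Xv a i m * cst (\<eta> m j) - cst (\<eta> i m) * Xv a m j"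
  have "etaR K \<alpha> \<eta> (ind_br dbr a b i j k l) \<simeq> eval2 (\<lambda>u. ?E u k j) (\<lambda>v. Xv v i l) (dbr a b)
      + eval2 (\<lambda>u. Xv u k j) (\<lambda>v. ?E v i l) (dbr a b)"
    unfolding ind_br_eq_eval2 etaR_eval2 by (intro req_add eval2_cong etaR_Xv_req[OF \<eta>] req_refl)
  also have "\<dots> = bracket (?E a i j) (Xv b k l) + bracket (Xv a i j) (?E b k l)"
    by (simp add: eval2_sum_left eval2_sum_right eval2_diff_left eval2_diff_right eval2_cmult_left
        eval2_multc_left eval2_cmult_right eval2_multc_right bracket_sum_left bracket_sum_right
        bracket_diff_left bracket_diff_right bracket_mult_left bracket_mult_right bracket_Xv_Xv
        ind_br_eq_eval2 sum_subtractf algebra_simps)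
  also have "\<dots> \<simeq> bracket (etaR K \<alpha> \<eta> (Xv a i j)) (Xv b k l) + bracket (Xv a i j) (etaR K \<alpha> \<eta> (Xv b k l))"
    by (intro req_add bracket_cong req_refl req_sym[OF etaR_Xv_req[OF \<eta>]])
  finally show ?thesis .
qed

lemma etaR_bracket:
  assumes \<eta>: "in_galpha K \<alpha> \<eta>"
  shows "etaR K \<alpha> \<eta> (bracket p q) \<simeq> bracket (etaR K \<alpha> \<eta> p) q + bracket p (etaR K \<alpha> \<eta> q)"
proof -
  let ?D = "\<lambda>p q. etaR K \<alpha> \<eta> (bracket p q) - bracket (etaR K \<alpha> \<eta> p) q - bracket p (etaR K \<alpha> \<eta> q)"
  have Xv_left: "?D (Xv a i j) q \<in> I" for a i j
    by (rule derivation_into_I[where D = "?D (Xv a i j)"])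
      (use etaR_ind_br[OF \<eta>] in \<open>auto simp: bracket_Xv_Xv bracket_add_right bracket_mult_right
        etaR_add etaR_mult req_iff algebra_simps\<close>)
  have "?D p q \<in> I"
    by (rule derivation_into_I[where D = "\<lambda>p. ?D p q"])
      (use Xv_left in \<open>auto simp: bracket_add_left bracket_mult_left etaR_add etaR_mult algebra_simps\<close>)
  then show ?thesis
    by (simp add: req_iff diff_diff_eq)
qed

lemma gactR_add: "gactR K \<alpha> g h (p + q) = gactR K \<alpha> g h p + gactR K \<alpha> g h q"
  by (simp add: gactR_def psubst_add)

lemma gactR_mult: "gactR K \<alpha> g h (p * q) = gactR K \<alpha> g h p * gactR K \<alpha> g h q"
  by (simp add: gactR_def psubst_mult)

lemma gactR_cst [simp]: "gactR K \<alpha> g h (cst c) = cst c"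
  by (simp add: gactR_def cst_def)

lemma gactR_zero [simp]: "gactR K \<alpha> g h 0 = 0"
  using gactR_cst[of g h 0] by simp

lemma gactR_Xv: "gactR K \<alpha> g h (Xv a i j) = (if i < N \<and> j < N then
    (\<Sum>p<N. \<Sum>q<N. cst (h i p) * Xv a p q * cst (g q j)) else Xv a i j)"
  unfolding gactR_def Xv_def psubst_var by (simp add: Let_def Xv_def)

lemma gactR_Xv_req:
  assumes g: "in_galpha K \<alpha> g" and h: "in_galpha K \<alpha> h"
  shows "gactR K \<alpha> g h (Xv a i j) \<simeq> (\<Sum>p<N. \<Sum>q<N. cst (h i p) * Xv a p q * cst (g q j))"
proof (cases "i < N \<and> j < N")
  case False
  have "g q j = 0" if "\<not> j < N" for q
    using g that by (auto simp: in_galpha_def)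
  moreover have "h i p = 0" if "\<not> i < N" for p
    using h that by (auto simp: in_galpha_def)
  ultimately have "(\<Sum>p<N. \<Sum>q<N. cst (h i p) * Xv a p q * cst (g q j)) = 0"
    using False by (cases "i < N") simp_all
  with False show ?thesis
    using Xv_outside_req by (simp add: gactR_Xv)
qed (simp add: gactR_Xv)

lemma gactR_eval2:
  "gactR K \<alpha> g h (eval2 f f' L) = eval2 (\<lambda>u. gactR K \<alpha> g h (f u)) (\<lambda>v. gactR K \<alpha> g h (f' v)) L"
  by (induction L) (auto simp: gactR_add gactR_mult)

lemma gactR_ind_br:
  assumes g: "in_galpha K \<alpha> g" and h: "in_galpha K \<alpha> h"
  shows "gactR K \<alpha> g h (ind_br dbr a b i j k l)
    \<simeq> bracket (gactR K \<alpha> g h (Xv a i j)) (gactR K \<alpha> g h (Xv b k l))"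
proof -
  let ?G = "\<lambda>a i j. \<Sum>p<N. \<Sum>q<N. cst (h i p) * Xv a p q * cst (g q j)"
  have "gactR K \<alpha> g h (ind_br dbr a b i j k l) \<simeq> eval2 (\<lambda>u. ?G u k j) (\<lambda>v. ?G v i l) (dbr a b)"
    unfolding ind_br_eq_eval2 gactR_eval2 by (intro eval2_cong gactR_Xv_req[OF g h])
  also have "\<dots> = (\<Sum>p<N. \<Sum>q<N. \<Sum>r<N. \<Sum>s<N.
      cst (h k p) * cst (g q j) * cst (h i r) * cst (g s l) * ind_br dbr a b r q p s)"
    by (simp add: eval2_sum_left eval2_sum_right eval2_cmult_left eval2_multc_left eval2_cmult_right
        eval2_multc_right ind_br_eq_eval2 sum_distrib_left sum_distrib_right mult_ac)
  also have "\<dots> = (\<Sum>p<N. \<Sum>s<N. \<Sum>r<N. \<Sum>q<N.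
      cst (h k p) * cst (g q j) * cst (h i r) * cst (g s l) * ind_br dbr a b r q p s)"
    by (rule sum.cong[OF refl], rule sum_swap_13)
  also have "\<dots> = bracket (?G a i j) (?G b k l)"
    by (simp add: bracket_sum_left bracket_sum_right bracket_mult_left bracket_mult_right bracket_Xv_Xv
        sum_distrib_left sum_distrib_right mult_ac)
  also have "\<dots> \<simeq> bracket (gactR K \<alpha> g h (Xv a i j)) (gactR K \<alpha> g h (Xv b k l))"
    by (intro bracket_cong req_sym[OF gactR_Xv_req[OF g h]])
  finally show ?thesis .
qed

lemma gactR_bracket:
  assumes g: "in_galpha K \<alpha> g" and h: "in_galpha K \<alpha> h"
  shows "gactR K \<alpha> g h (bracket p q) \<simeq> bracket (gactR K \<alpha> g h p) (gactR K \<alpha> g h q)"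
proof -
  let ?\<phi> = "gactR K \<alpha> g h"
  let ?D = "\<lambda>p q. ?\<phi> (bracket p q) - bracket (?\<phi> p) (?\<phi> q)"
  have Xv_left: "?D (Xv a i j) q \<in> I" for a i j
    by (rule twisted_derivation_into_I[where D = "?D (Xv a i j)" and \<phi> = ?\<phi> and \<psi> = ?\<phi>])
      (use gactR_ind_br[OF g h] in \<open>auto simp: bracket_Xv_Xv bracket_add_right bracket_mult_right
        gactR_add gactR_mult req_iff algebra_simps\<close>)
  have "?D p q \<in> I"
    by (rule twisted_derivation_into_I[where D = "\<lambda>p. ?D p q" and \<phi> = ?\<phi> and \<psi> = ?\<phi>])
      (use Xv_left in \<open>auto simp: bracket_add_left bracket_mult_left gactR_add gactR_mult algebra_simps\<close>)
  then show ?thesis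
    by (simp add: req_iff)
qed

section \<open>The quasi-Poisson identity\<close>

definition row :: "'a \<Rightarrow> nat \<Rightarrow> nat \<Rightarrow> ('a, 'k) rpoly" where
  "row x p m = Xv x p m"

definition col :: "'a \<Rightarrow> nat \<Rightarrow> nat \<Rightarrow> ('a, 'k) rpoly" where
  "col x q m = Xv x m q"

definition kdelta :: "nat \<Rightarrow> nat \<Rightarrow> ('a, 'k) rpoly" where
  "kdelta p m = (if m = p then 1 else 0)"

text \<open>bpair s (row x p) (col y q) is the (p, q) entry of X(x e_s y); kdelta takes the place of
  an absent factor x or y.\<close>

definition bpair :: "nat \<Rightarrow> (nat \<Rightarrow> ('a, 'k) rpoly) \<Rightarrow> (nat \<Rightarrow> ('a, 'k) rpoly) \<Rightarrow> ('a, 'k) rpoly" where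
  "bpair s f g = (\<Sum>m<N. if inblock \<alpha> s m then f m * g m else 0)"

lemma bpair_commute: "bpair s f g = bpair s g f"
  by (simp add: bpair_def mult.commute cong: if_cong)

lemma bpair_kdelta:
  assumes "s < K"
  shows "bpair s (kdelta p) f = (if inblock \<alpha> s p then f p else 0)"
proof -
  have "bpair s (kdelta p) f = (\<Sum>m<N. if m = p then (if inblock \<alpha> s p then f p else 0) else 0)"
    unfolding bpair_def kdelta_def by (rule sum.cong) auto
  then show ?thesis
    using inblock_less_dimN[OF assms, where i = p] by auto
qed

lemma Xv_idempotent_bpair:
  assumes "s < K"
  shows "Xv (e s) p q \<simeq> bpair s (kdelta p) (kdelta q)"
proof -
  have "cst (eblk \<alpha> s p q) = bpair s (kdelta p) (kdelta q)"
    by (simp add: bpair_kdelta[OF assms] eblk_def kdelta_def)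
  then show ?thesis
    using Xv_idempotent[OF assms, of p q] by simp
qed

lemma Xv_mult_idempotent:
  assumes s: "s < K"
  shows "Xv (x * e s) p q \<simeq> bpair s (row x p) (kdelta q)"
proof -
  have "Xv (x * e s) p q \<simeq> (\<Sum>m<N. Xv x p m * Xv (e s) m q)"
    by (rule Xv_mult)
  also have "\<dots> \<simeq> (\<Sum>m<N. Xv x p m * bpair s (kdelta m) (kdelta q))"
    by (intro req_sum req_mult req_refl Xv_idempotent_bpair s)
  also have "\<dots> = (\<Sum>m<N. if m = q then (if inblock \<alpha> s q then Xv x p q else 0) else 0)"
    by (rule sum.cong) (auto simp: bpair_kdelta[OF s] kdelta_def)
  also have "\<dots> = bpair s (row x p) (kdelta q)"
    using inblock_less_dimN[OF s, where i = q] by (auto simp: bpair_commute[of s "row x p"] bpair_kdelta[OF s] row_def)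
  finally show ?thesis .
qed

lemma Xv_idempotent_mult:
  assumes s: "s < K"
  shows "Xv (e s * x) p q \<simeq> bpair s (kdelta p) (col x q)"
proof -
  have "Xv (e s * x) p q \<simeq> (\<Sum>m<N. Xv (e s) p m * Xv x m q)"
    by (rule Xv_mult)
  also have "\<dots> \<simeq> (\<Sum>m<N. bpair s (kdelta p) (kdelta m) * Xv x m q)"
    by (intro req_sum req_mult req_refl Xv_idempotent_bpair s)
  also have "\<dots> = (\<Sum>m<N. if m = p then (if inblock \<alpha> s p then Xv x p q else 0) else 0)"
    by (rule sum.cong) (auto simp: bpair_kdelta[OF s] kdelta_def)
  also have "\<dots> = bpair s (kdelta p) (col x q)"
    using inblock_less_dimN[OF s, where i = p] by (auto simp: bpair_kdelta[OF s] col_def)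
  finally show ?thesis .
qed

lemma Xv_mult_idempotent_mult:
  assumes s: "s < K"
  shows "Xv (x * e s * y) p q \<simeq> bpair s (row x p) (col y q)"
proof -
  have "Xv (x * e s * y) p q \<simeq> (\<Sum>m<N. Xv (x * e s) p m * Xv y m q)"
    by (rule Xv_mult)
  also have "\<dots> \<simeq> (\<Sum>m<N. bpair s (row x p) (kdelta m) * Xv y m q)"
    by (intro req_sum req_mult req_refl Xv_mult_idempotent s)
  also have "\<dots> = bpair s (row x p) (col y q)"
    unfolding bpair_def[of s "row x p" "col y q"]
    by (rule sum.cong) (auto simp: bpair_commute[of s "row x p"] bpair_kdelta[OF s] row_def col_def)
  finally show ?thesis .
qed

abbreviation eval3_Xv :: "nat \<Rightarrow> nat \<Rightarrow> nat \<Rightarrow> nat \<Rightarrow> nat \<Rightarrow> nat \<Rightarrow> ('a \<times> 'a \<times> 'a) list \<Rightarrow> ('a, 'k) rpoly" where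
  "eval3_Xv i1 j1 i2 j2 i3 j3 \<equiv> eval3 (\<lambda>x. Xv x i1 j1) (\<lambda>y. Xv y i2 j2) (\<lambda>z. Xv z i3 j3)"

text \<open>Four times the (i1 j1, i2 j2, i3 j3) component of the s-th summand of qP_rhs, each factor
  being rewritten by one of the four lemmas above.\<close>

definition qP_block :: "nat \<Rightarrow> 'a \<Rightarrow> 'a \<Rightarrow> 'a \<Rightarrow> nat \<Rightarrow> nat \<Rightarrow> nat \<Rightarrow> nat \<Rightarrow> nat \<Rightarrow> nat \<Rightarrow> ('a, 'k) rpoly" where
  "qP_block s a b c i1 j1 i2 j2 i3 j3 =
      bpair s (row c i1) (col a j1) * bpair s (kdelta i2) (col b j2) * bpair s (kdelta i3) (kdelta j3)
    - bpair s (row c i1) (col a j1) * bpair s (kdelta i2) (kdelta j2) * bpair s (row b i3) (kdelta j3)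
    - bpair s (row c i1) (kdelta j1) * bpair s (row a i2) (col b j2) * bpair s (kdelta i3) (kdelta j3)
    + bpair s (row c i1) (kdelta j1) * bpair s (row a i2) (kdelta j2) * bpair s (row b i3) (kdelta j3)
    - bpair s (kdelta i1) (col a j1) * bpair s (kdelta i2) (col b j2) * bpair s (kdelta i3) (col c j3)
    + bpair s (kdelta i1) (col a j1) * bpair s (kdelta i2) (kdelta j2) * bpair s (row b i3) (col c j3)
    + bpair s (kdelta i1) (kdelta j1) * bpair s (row a i2) (col b j2) * bpair s (kdelta i3) (col c j3)
    - bpair s (kdelta i1) (kdelta j1) * bpair s (row a i2) (kdelta j2) * bpair s (row b i3) (col c j3)"

lemma eval3_Xv_qP_rhs:
  "eval3_Xv i1 j1 i2 j2 i3 j3 (qP_rhs sm K e a b c) \<simeq> cst (1/4) * (\<Sum>s<K. qP_block s a b c i1 j1 i2 j2 i3 j3)"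
proof -
  have block: "eval3_Xv i1 j1 i2 j2 i3 j3 (let es = e s; p = sm (1/4); m = sm (-(1/4)) in
     [ (p (c * es * a), es * b, es), (m (c * es * a), es, b * es), (m (c * es), a * es * b, es),
       (p (c * es), a * es, b * es), (m (es * a), es * b, es * c), (p (es * a), es, b * es * c),
       (p es, a * es * b, es * c), (m es, a * es, b * es * c) ])
    \<simeq> cst (1/4) * qP_block s a b c i1 j1 i2 j2 i3 j3" if s: "s < K" for s
  proof -
    let ?q = "cst (1/4) :: ('a, 'k) rpoly" and ?m = "cst (- (1/4)) :: ('a, 'k) rpoly"
    have "eval3_Xv i1 j1 i2 j2 i3 j3 (let es = e s; p = sm (1/4); m = sm (-(1/4)) in
     [ (p (c * es * a), es * b, es), (m (c * es * a), es, b * es), (m (c * es), a * es * b, es),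
       (p (c * es), a * es, b * es), (m (es * a), es * b, es * c), (p (es * a), es, b * es * c),
       (p es, a * es * b, es * c), (m es, a * es, b * es * c) ])
      \<simeq> ?q * bpair s (row c i1) (col a j1) * bpair s (kdelta i2) (col b j2) * bpair s (kdelta i3) (kdelta j3)
      + (?m * bpair s (row c i1) (col a j1) * bpair s (kdelta i2) (kdelta j2) * bpair s (row b i3) (kdelta j3)
      + (?m * bpair s (row c i1) (kdelta j1) * bpair s (row a i2) (col b j2) * bpair s (kdelta i3) (kdelta j3)
      + (?q * bpair s (row c i1) (kdelta j1) * bpair s (row a i2) (kdelta j2) * bpair s (row b i3) (kdelta j3)
      + (?m * bpair s (kdelta i1) (col a j1) * bpair s (kdelta i2) (col b j2) * bpair s (kdelta i3) (col c j3)
      + (?q * bpair s (kdelta i1) (col a j1) * bpair s (kdelta i2) (kdelta j2) * bpair s (row b i3) (col c j3)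
      + (?q * bpair s (kdelta i1) (kdelta j1) * bpair s (row a i2) (col b j2) * bpair s (kdelta i3) (col c j3)
      + ?m * bpair s (kdelta i1) (kdelta j1) * bpair s (row a i2) (kdelta j2) * bpair s (row b i3) (col c j3)))))))"
      unfolding eval3_def Let_def
      by (simp only: list.map prod.case sum_list.Cons sum_list.Nil add_0_right)
        (intro req_add req_mult req_trans[OF Xv_smult] req_refl Xv_idempotent_bpair Xv_mult_idempotent
          Xv_idempotent_mult Xv_mult_idempotent_mult s)
    also have "\<dots> = ?q * qP_block s a b c i1 j1 i2 j2 i3 j3"
      by (simp add: qP_block_def cst_uminus algebra_simps)
    finally show ?thesis .
  qed
  have "eval3_Xv i1 j1 i2 j2 i3 j3 (qP_rhs sm K e a b c) \<simeq> (\<Sum>s<K. cst (1/4) * qP_block s a b c i1 j1 i2 j2 i3 j3)"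
    unfolding qP_rhs_def eval3_concat
    by (simp only: interv_sum_list_conv_sum_set_nat set_upt atLeast0LessThan) (intro req_sum block, simp)
  then show ?thesis
    by (simp add: sum_distrib_left)
qed

lemma etaR_Emat_Xv:
  assumes "i < N" "j < N" "p < N" "r < N"
  shows "etaR K \<alpha> (Emat p r) (Xv x i j) = row x i p * kdelta j r - kdelta i p * col x j r"
proof -
  have "etaR K \<alpha> (Emat p r) (Xv x i j)
      = (\<Sum>m<N. Xv x i m * cst (Emat p r m j)) - (\<Sum>m<N. cst (Emat p r i m) * Xv x m j)"
    using assms by (simp add: etaR_Xv sum_subtractf)
  also have "(\<Sum>m<N. Xv x i m * cst (Emat p r m j)) = row x i p * kdelta j r"
    using assms by (simp add: Emat_def row_def kdelta_def if_distrib[of cst] if_distrib[of "\<lambda>c. _ * c"] cong: if_cong)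
  also have "(\<Sum>m<N. cst (Emat p r i m) * Xv x m j) = kdelta i p * col x j r"
    using assms by (simp add: Emat_def col_def kdelta_def if_distrib[of cst] if_distrib[of "\<lambda>c. c * _"] cong: if_cong)
  finally show ?thesis .
qed

lemma bpair_trace3:
  "(\<Sum>p<N. \<Sum>r<N. \<Sum>q<N. if inblock \<alpha> s p \<and> inblock \<alpha> s r \<and> inblock \<alpha> s q
      then f1 p * g1 r * (f2 q * g2 p) * (f3 r * g3 q) else 0)
    = bpair s f1 g2 * bpair s f3 g1 * bpair s f2 g3"
  unfolding bpair_def sum_product3 by (intro sum.cong refl) (simp add: mult_ac)

lemma bpair_trace3_rank2:
  "(\<Sum>p<N. \<Sum>r<N. \<Sum>q<N. if inblock \<alpha> s p \<and> inblock \<alpha> s r \<and> inblock \<alpha> s q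
      then (f1 p * g1 r - h1 p * k1 r) * (f2 q * g2 p - h2 q * k2 p) * (f3 r * g3 q - h3 r * k3 q) else 0)
    = bpair s f1 g2 * bpair s f3 g1 * bpair s f2 g3 - bpair s f1 g2 * bpair s h3 g1 * bpair s f2 k3
    - bpair s f1 k2 * bpair s f3 g1 * bpair s h2 g3 + bpair s f1 k2 * bpair s h3 g1 * bpair s h2 k3
    - bpair s h1 g2 * bpair s f3 k1 * bpair s f2 g3 + bpair s h1 g2 * bpair s h3 k1 * bpair s f2 k3
    + bpair s h1 k2 * bpair s f3 k1 * bpair s h2 g3 - bpair s h1 k2 * bpair s h3 k1 * bpair s h2 k3"
proof -
  have if_diff: "(if P then x - y else 0) = (if P then x else 0) - (if P then y else (0::('a, 'k) rpoly))" for P x y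
    by simp
  show ?thesis
    by (simp only: left_diff_distrib right_diff_distrib if_diff sum_subtractf bpair_trace3)
      (simp add: algebra_simps)
qed

lemma sum_blocks:
  assumes "p < N" "q < N" "r < N"
  shows "(\<Sum>s<K. if inblock \<alpha> s p \<and> inblock \<alpha> s q \<and> inblock \<alpha> s r then F else 0) =
     (if sameblock K \<alpha> p q \<and> sameblock K \<alpha> r p \<and> sameblock K \<alpha> q r then F else (0::'r::comm_monoid_add))"
proof (cases "\<exists>s<K. inblock \<alpha> s p \<and> inblock \<alpha> s q \<and> inblock \<alpha> s r")
  case True
  then obtain s where s: "s < K" "inblock \<alpha> s p" "inblock \<alpha> s q" "inblock \<alpha> s r"
    by blast
  then have "(\<Sum>t<K. if inblock \<alpha> t p \<and> inblock \<alpha> t q \<and> inblock \<alpha> t r then F else 0) = (\<Sum>t<K. if t = s then F else 0)"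
    by (intro sum.cong refl) (auto dest: inblock_unique)
  with s show ?thesis
    by (auto simp: sameblock_def)
next
  case False
  then have "\<not> (sameblock K \<alpha> p q \<and> sameblock K \<alpha> r p \<and> sameblock K \<alpha> q r)"
    unfolding sameblock_def by (metis inblock_unique)
  moreover have "(\<Sum>s<K. if inblock \<alpha> s p \<and> inblock \<alpha> s q \<and> inblock \<alpha> s r then F else 0) = 0"
    using False by (intro sum.neutral) auto
  ultimately show ?thesis
    by auto
qed

lemma sum_swap_out3:
  "(\<Sum>a\<in>A. \<Sum>b\<in>B. \<Sum>c\<in>C. \<Sum>d\<in>D. f a b c d) = (\<Sum>d\<in>D. \<Sum>a\<in>A. \<Sum>b\<in>B. \<Sum>c\<in>C. f a b c d)"
proof -
  have "(\<Sum>a\<in>A. \<Sum>b\<in>B. \<Sum>c\<in>C. \<Sum>d\<in>D. f a b c d) = (\<Sum>a\<in>A. \<Sum>b\<in>B. \<Sum>d\<in>D. \<Sum>c\<in>C. f a b c d)"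
    by (intro sum.cong refl sum.swap)
  also have "\<dots> = (\<Sum>a\<in>A. \<Sum>d\<in>D. \<Sum>b\<in>B. \<Sum>c\<in>C. f a b c d)"
    by (intro sum.cong refl sum.swap)
  finally show ?thesis
    by (simp only: sum.swap[of _ A D])
qed

lemma cyclic_sum_etaR_Xv:
  assumes "i < N" "j < N" "k < N" "l < N" "u < N" "v < N"
  shows "cartan_cyclic_sum K \<alpha> (\<lambda>x y z. etaR K \<alpha> x (Xv a i j) * etaR K \<alpha> y (Xv b k l) * etaR K \<alpha> z (Xv c u v))
    = (\<Sum>s<K. qP_block s a b c u j i l k v)"
proof -
  have "cartan_cyclic_sum K \<alpha> (\<lambda>x y z. etaR K \<alpha> x (Xv a i j) * etaR K \<alpha> y (Xv b k l) * etaR K \<alpha> z (Xv c u v))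
    = (\<Sum>p<N. \<Sum>r<N. \<Sum>q<N. \<Sum>s<K. if inblock \<alpha> s p \<and> inblock \<alpha> s r \<and> inblock \<alpha> s q then
        (row a i p * kdelta j r - kdelta i p * col a j r) * (row b k q * kdelta l p - kdelta k q * col b l p)
        * (row c u r * kdelta v q - kdelta u r * col c v q) else 0)"
    unfolding cartan_cyclic_sum_def by (intro sum.cong refl) (simp add: sum_blocks etaR_Emat_Xv assms)
  also have "\<dots> = (\<Sum>s<K. qP_block s a b c u j i l k v)"
    unfolding sum_swap_out3 bpair_trace3_rank2
    by (intro sum.cong refl) (simp add: qP_block_def algebra_simps)
  finally show ?thesis .
qed

lemma phiR_Xv:
  assumes "i < N" "j < N" "k < N" "l < N" "u < N" "v < N"
  shows "cst (1/2) * phiR K \<alpha> (Xv a i j) (Xv b k l) (Xv c u v)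
    = cst (1/4) * (\<Sum>s<K. qP_block s a b c u j i l k v) - cst (1/4) * (\<Sum>s<K. qP_block s a c b k j i v u l)"
proof -
  let ?F = "\<lambda>x y z. etaR K \<alpha> x (Xv a i j) * etaR K \<alpha> y (Xv b k l) * etaR K \<alpha> z (Xv c u v)"
  have swap: "(\<lambda>x y z. ?F x z y) = (\<lambda>x y z. etaR K \<alpha> x (Xv a i j) * etaR K \<alpha> y (Xv c u v) * etaR K \<alpha> z (Xv b k l))"
    by (simp add: fun_eq_iff mult_ac)
  have "phiR K \<alpha> (Xv a i j) (Xv b k l) (Xv c u v)
      = cst (1/12) * 6 * (cartan_cyclic_sum K \<alpha> ?F - cartan_cyclic_sum K \<alpha> (\<lambda>x y z. ?F x z y))"
    unfolding phiR_def by (rule cartan_eval_eq_cyclic_sums) (simp_all add: cst_uminus)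
  also have "cartan_cyclic_sum K \<alpha> ?F = (\<Sum>s<K. qP_block s a b c u j i l k v)"
    by (rule cyclic_sum_etaR_Xv[OF assms])
  also have "cartan_cyclic_sum K \<alpha> (\<lambda>x y z. ?F x z y) = (\<Sum>s<K. qP_block s a c b k j i v u l)"
    unfolding swap by (rule cyclic_sum_etaR_Xv) (use assms in auto)
  finally have "cst (1/2) * phiR K \<alpha> (Xv a i j) (Xv b k l) (Xv c u v)
      = cst (1/2) * cst (1/12) * 6 * ((\<Sum>s<K. qP_block s a b c u j i l k v) - (\<Sum>s<K. qP_block s a c b k j i v u l))"
    by (simp only: mult.assoc)
  moreover have "cst (1/2) * cst (1/12) * 6 = (cst (1/4) :: ('a, 'k) rpoly)"
  proof -
    have "(6 :: ('a, 'k) rpoly) = cst 6"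
      by (simp add: cst_def)
    then have "cst (1/2) * cst (1/12) * 6 = (cst (1/2 * (1/12) * 6) :: ('a, 'k) rpoly)"
      by (simp only: cst_mult)
    then show ?thesis
      by simp
  qed
  ultimately show ?thesis
    by (simp only: right_diff_distrib)
qed

lemma phiR_rotate: "phiR K \<alpha> p q r = phiR K \<alpha> q r p"
proof -
  have "wedge3 (\<lambda>x y z. etaR K \<alpha> x q * etaR K \<alpha> y r * etaR K \<alpha> z p) a b c
      = wedge3 (\<lambda>x y z. etaR K \<alpha> x p * etaR K \<alpha> y q * etaR K \<alpha> z r) a b c" for a b c
    using wedge3_rotate[of "\<lambda>x y z. etaR K \<alpha> x p * etaR K \<alpha> y q * etaR K \<alpha> z r"] by (simp add: mult_ac)
  then show ?thesis
    by (simp add: phiR_def cartan_eval_def)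
qed

lemma phiR_add_right: "phiR K \<alpha> p q (r + r') = phiR K \<alpha> p q r + phiR K \<alpha> p q r'"
  using cartan_eval_linear[of K \<alpha> "\<lambda>x y z. etaR K \<alpha> x p * etaR K \<alpha> y q * etaR K \<alpha> z r" 1 1
      "\<lambda>x y z. etaR K \<alpha> x p * etaR K \<alpha> y q * etaR K \<alpha> z r'" cst]
  by (simp add: phiR_def etaR_add distrib_left)

lemma phiR_mult_right: "phiR K \<alpha> p q (r * r') = phiR K \<alpha> p q r * r' + r * phiR K \<alpha> p q r'"
  using cartan_eval_linear[of K \<alpha> "\<lambda>x y z. etaR K \<alpha> x p * etaR K \<alpha> y q * etaR K \<alpha> z r" r' r
      "\<lambda>x y z. etaR K \<alpha> x p * etaR K \<alpha> y q * etaR K \<alpha> z r'" cst]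
  by (simp add: phiR_def etaR_mult algebra_simps)

lemma phiR_cst_right [simp]: "phiR K \<alpha> p q (cst c) = 0"
  by (simp add: phiR_def cartan_eval_def wedge3_def)

lemma phiR_Xv_outside:
  assumes "\<not> (i < N \<and> j < N)"
  shows "phiR K \<alpha> (Xv a i j :: ('a, 'k) rpoly) q r = 0"
proof -
  have "etaR K \<alpha> x (Xv a i j :: ('a, 'k) rpoly) = 0" for x
    using assms by (auto simp: etaR_Xv)
  then show ?thesis
    by (simp add: phiR_def cartan_eval_def wedge3_def)
qed

definition jacobiator :: "('a, 'k) rpoly \<Rightarrow> ('a, 'k) rpoly \<Rightarrow> ('a, 'k) rpoly \<Rightarrow> ('a, 'k) rpoly" where
  "jacobiator p q r = bracket p (bracket q r) + bracket q (bracket r p) + bracket r (bracket p q)"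

lemma jacobiator_rotate: "jacobiator p q r = jacobiator q r p"
  by (simp add: jacobiator_def algebra_simps)

lemma jacobiator_add_right: "jacobiator p q (r + r') = jacobiator p q r + jacobiator p q r'"
  by (simp add: jacobiator_def bracket_add_left bracket_add_right algebra_simps)

lemma jacobiator_cst_right [simp]: "jacobiator p q (cst c) = 0"
  by (simp add: jacobiator_def)

text \<open>The Jacobiator is a derivation in each argument only modulo the antisymmetry of the bracket.\<close>

lemma jacobiator_mult_right: "jacobiator p q (r * r') - (jacobiator p q r * r' + r * jacobiator p q r') \<in> I"
proof -
  have "jacobiator p q (r * r') - (jacobiator p q r * r' + r * jacobiator p q r')
      = bracket q r * (bracket p r' + bracket r' p) + bracket q r' * (bracket p r + bracket r p)"
    by (simp add: jacobiator_def bracket_mult_left bracket_mult_right bracket_add_left bracket_add_right algebra_simps)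
  then show ?thesis
    using bracket_swap_I by (simp add: I_add I_mult_left)
qed

lemma jacobiator_Xv_outside:
  assumes "\<not> (i < N \<and> j < N)"
  shows "jacobiator (Xv a i j) q r \<simeq> 0"
proof -
  have "jacobiator (Xv a i j) q r \<simeq> jacobiator 0 q r"
    unfolding jacobiator_def by (intro req_add bracket_cong req_refl Xv_outside_req assms)
  then show ?thesis
    by (simp add: jacobiator_def)
qed

lemma bracket_Xv_bracket_Xv:
  "bracket (Xv a i j) (bracket (Xv b k l) (Xv c u v))
    \<simeq> eval3_Xv u j i l k v (dbr_out dbr a (dbr b c)) - eval3_Xv k j i v u l (dbr_out dbr a (dbr c b))"
proof -
  have "bracket (Xv a i j) (bracket (Xv b k l) (Xv c u v))
      = eval2 (\<lambda>x. ind_br dbr a x i j u l) (\<lambda>y. Xv y k v) (dbr b c)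
      + eval2 (\<lambda>x. Xv x u l) (\<lambda>y. ind_br dbr a y i j k v) (dbr b c)"
    by (simp add: bracket_Xv_Xv ind_br_eq_eval2[of b c] bracket_eval2_right)
  also have "\<dots> \<simeq> eval2 (\<lambda>x. ind_br dbr a x i j u l) (\<lambda>y. Xv y k v) (dbr b c)
      + - eval2 (\<lambda>y. ind_br dbr a y i j k v) (\<lambda>x. Xv x u l) (dbr c b)"
    unfolding ind_br_eq_eval2
    by (intro req_add req_refl eval2_dbr_swap R_linear_Xv R_linear_eval2_dbr_right)
  finally show ?thesis
    by (simp add: eval3_dbr_out ind_br_eq_eval2)
qed

lemma jacobiator_Xv:
  "jacobiator (Xv a i j) (Xv b k l) (Xv c u v)
    \<simeq> eval3_Xv u j i l k v (triple_bracket dbr a b c) - eval3_Xv k j i v u l (triple_bracket dbr a c b)"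
proof -
  have "jacobiator (Xv a i j) (Xv b k l) (Xv c u v) \<simeq>
      (eval3_Xv u j i l k v (dbr_out dbr a (dbr b c)) - eval3_Xv k j i v u l (dbr_out dbr a (dbr c b)))
    + (eval3_Xv i l k v u j (dbr_out dbr b (dbr c a)) - eval3_Xv u l k j i v (dbr_out dbr b (dbr a c)))
    + (eval3_Xv k v u j i l (dbr_out dbr c (dbr a b)) - eval3_Xv i v u l k j (dbr_out dbr c (dbr b a)))"
    unfolding jacobiator_def by (intro req_add bracket_Xv_bracket_Xv)
  then show ?thesis
    by (simp add: eval3_triple_bracket algebra_simps)
qed

lemma jacobiator_Xv_quasi_Poisson:
  assumes "i < N" "j < N" "k < N" "l < N" "u < N" "v < N"
  shows "jacobiator (Xv a i j) (Xv b k l) (Xv c u v) \<simeq> cst (1/2) * phiR K \<alpha> (Xv a i j) (Xv b k l) (Xv c u v)"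
proof -
  have "jacobiator (Xv a i j) (Xv b k l) (Xv c u v)
      \<simeq> eval3_Xv u j i l k v (qP_rhs sm K e a b c) - eval3_Xv k j i v u l (qP_rhs sm K e a c b)"
    using jacobiator_Xv by (rule req_trans) (intro req_diff eval3_teq3 R_linear_Xv dbr_triple_bracket)
  also have "\<dots> \<simeq> cst (1/4) * (\<Sum>s<K. qP_block s a b c u j i l k v) - cst (1/4) * (\<Sum>s<K. qP_block s a c b k j i v u l)"
    by (intro req_diff eval3_Xv_qP_rhs)
  finally show ?thesis
    by (simp add: phiR_Xv assms)
qed

lemma cyclic_derivation_into_I:
  assumes rotate: "\<And>p q r. D p q r = D q r p"
    and add: "\<And>p q r r'. D p q (r + r') = D p q r + D p q r'"
    and leibniz: "\<And>p q r r'. D p q (r * r') - (D p q r * r' + r * D p q r') \<in> I"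
    and cst: "\<And>p q c. D p q (cst c) \<in> I"
    and Xv: "\<And>a i j b k l c u v. D (Xv a i j) (Xv b k l) (Xv c u v) \<in> I"
  shows "D p q r \<in> I"
proof -
  have third: "D p q r \<in> I" if "\<And>a i j. D p q (Xv a i j) \<in> I" for p q r
    by (rule derivation_into_I[where D = "D p q"]) (use add leibniz cst that in auto)
  have first_Xv: "D (Xv a i j) q r \<in> I" for a i j q r
  proof (rule third)
    fix c u v
    have "D (Xv c u v) (Xv a i j) q \<in> I"
      by (rule third) (rule Xv)
    then show "D (Xv a i j) q (Xv c u v) \<in> I"
      by (simp only: rotate[of "Xv a i j" q] rotate[of q])
  qed
  show ?thesis
    by (rule third) (simp only: rotate[of p q] rotate[of q] first_Xv)
qed

definition quasi_Poisson_defect :: "('a, 'k) rpoly \<Rightarrow> ('a, 'k) rpoly \<Rightarrow> ('a, 'k) rpoly \<Rightarrow> ('a, 'k) rpoly" where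
  "quasi_Poisson_defect p q r = jacobiator p q r - cst (1/2) * phiR K \<alpha> p q r"

lemma quasi_Poisson_defect_rotate: "quasi_Poisson_defect p q r = quasi_Poisson_defect q r p"
  by (simp add: quasi_Poisson_defect_def jacobiator_rotate[of p] phiR_rotate[of p])

lemma quasi_Poisson_defect_Xv: "quasi_Poisson_defect (Xv a i j) (Xv b k l) (Xv c u v) \<in> I"
proof -
  have outside: "quasi_Poisson_defect (Xv a i j) q r \<in> I" if "\<not> (i < N \<and> j < N)" for a i j q r
    using jacobiator_Xv_outside[OF that] phiR_Xv_outside[OF that] by (simp add: quasi_Poisson_defect_def req_zero_iff)
  consider "i < N \<and> j < N \<and> k < N \<and> l < N \<and> u < N \<and> v < N"
    | "\<not> (i < N \<and> j < N)" | "\<not> (k < N \<and> l < N)" | "\<not> (u < N \<and> v < N)"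
    by blast
  then show ?thesis
  proof cases
    case 1
    then show ?thesis
      using jacobiator_Xv_quasi_Poisson[of i j k l u v a b c] by (simp add: quasi_Poisson_defect_def req_iff)
  next
    case 2
    then show ?thesis by (rule outside)
  next
    case 3
    then have "quasi_Poisson_defect (Xv b k l) (Xv c u v) (Xv a i j) \<in> I"
      by (rule outside)
    then show ?thesis
      by (simp only: quasi_Poisson_defect_rotate[of "Xv a i j"])
  next
    case 4
    then have "quasi_Poisson_defect (Xv c u v) (Xv a i j) (Xv b k l) \<in> I"
      by (rule outside)
    then show ?thesis
      by (simp only: quasi_Poisson_defect_rotate[of "Xv a i j"] quasi_Poisson_defect_rotate[of "Xv b k l"])
  qed
qed

theorem quasi_Poisson_jacobi: "jacobiator p q r \<simeq> cst (1/2) * phiR K \<alpha> p q r"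
proof -
  have "quasi_Poisson_defect p q r \<in> I"
  proof (rule cyclic_derivation_into_I[where D = quasi_Poisson_defect])
    show "quasi_Poisson_defect p q (r * r') - (quasi_Poisson_defect p q r * r' + r * quasi_Poisson_defect p q r') \<in> I"
      for p q r r'
      using jacobiator_mult_right[of p q r r'] by (simp add: quasi_Poisson_defect_def phiR_mult_right algebra_simps)
    show "quasi_Poisson_defect p q (r + r') = quasi_Poisson_defect p q r + quasi_Poisson_defect p q r'" for p q r r'
      by (simp add: quasi_Poisson_defect_def jacobiator_add_right phiR_add_right algebra_simps)
    show "quasi_Poisson_defect p q (cst c) \<in> I" for p q c
      by (simp add: quasi_Poisson_defect_def)
  qed (rule quasi_Poisson_defect_rotate quasi_Poisson_defect_Xv)+
  then show ?thesis
    by (simp add: quasi_Poisson_defect_def req_iff)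
qed

end

theorem theorem5p6:
  fixes sm :: "'k::field_char_0 \<Rightarrow> 'a::ring \<Rightarrow> 'a"
    and K :: nat and e :: "nat \<Rightarrow> 'a"
    and dbr :: "'a \<Rightarrow> 'a \<Rightarrow> ('a \<times> 'a) list"
    and \<alpha> :: "nat \<Rightarrow> nat"
  assumes dqP: "double_quasi_Poisson sm K e dbr"
  shows "\<exists>br :: ('a, 'k) rpoly \<Rightarrow> ('a, 'k) rpoly \<Rightarrow> ('a, 'k) rpoly.
     \<comment> \<open>br is well defined on R = O(Rep(A, alpha))\<close>
     (\<forall>p p' q q'. req sm K e \<alpha> p p' \<longrightarrow> req sm K e \<alpha> q q' \<longrightarrow> req sm K e \<alpha> (br p q) (br p' q')) \<and>
     \<comment> \<open>antisymmetric\<close>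
     (\<forall>p q. req sm K e \<alpha> (br p q) (- br q p)) \<and>
     \<comment> \<open>k-bilinear biderivation\<close>
     (\<forall>p q r. req sm K e \<alpha> (br p (q + r)) (br p q + br p r)) \<and>
     (\<forall>p q r. req sm K e \<alpha> (br (p + q) r) (br p r + br q r)) \<and>
     (\<forall>c p q. req sm K e \<alpha> (br p (cst c * q)) (cst c * br p q)) \<and>
     (\<forall>c p q. req sm K e \<alpha> (br (cst c * p) q) (cst c * br p q)) \<and>
     (\<forall>p q r. req sm K e \<alpha> (br p (q * r)) (br p q * r + q * br p r)) \<and>
     (\<forall>p q r. req sm K e \<alpha> (br (p * q) r) (br p r * q + p * br q r)) \<and>
     \<comment> \<open>the defining formula on generators\<close>
     (\<forall>a b i j k l. i < dimN K \<alpha> \<longrightarrow> j < dimN K \<alpha> \<longrightarrow> k < dimN K \<alpha> \<longrightarrow> l < dimN K \<alpha> \<longrightarrow>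
        req sm K e \<alpha> (br (Xv a i j) (Xv b k l)) (ind_br dbr a b i j k l)) \<and>
     \<comment> \<open>g_alpha-invariance\<close>
     (\<forall>\<eta> p q. in_galpha K \<alpha> \<eta> \<longrightarrow>
        req sm K e \<alpha> (etaR K \<alpha> \<eta> (br p q)) (br (etaR K \<alpha> \<eta> p) q + br p (etaR K \<alpha> \<eta> q))) \<and>
     \<comment> \<open>quasi-Poisson Jacobi identity\<close>
     (\<forall>p q r. req sm K e \<alpha> (br p (br q r) + br q (br r p) + br r (br p q))
                          (cst (1/2) * phiR K \<alpha> p q r)) \<and>
     \<comment> \<open>GL_alpha-invariance\<close>
     (\<forall>g h p q. in_GLalpha K \<alpha> g h \<longrightarrow>
        req sm K e \<alpha> (gactR K \<alpha> g h (br p q)) (br (gactR K \<alpha> g h p) (gactR K \<alpha> g h q))) \<and>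
     \<comment> \<open>the Cartan trivector is GL_alpha-invariant\<close>
     (\<forall>(g :: nat \<Rightarrow> nat \<Rightarrow> 'k) h. in_GLalpha K \<alpha> g h \<longrightarrow>
        cartan_comp K \<alpha> (Adm (dimN K \<alpha>) g h) = cartan_comp K \<alpha> id)"
proof -
  interpret rep_quasi_Poisson sm K e dbr \<alpha>
    by unfold_locales (rule dqP)
  show ?thesis
  proof (intro exI[of _ bracket] conjI allI impI)
    show "bracket p q \<simeq> bracket p' q'" if "p \<simeq> p'" "q \<simeq> q'" for p p' q q'
      using that by (rule bracket_cong)
    show "etaR K \<alpha> \<eta> (bracket p q) \<simeq> bracket (etaR K \<alpha> \<eta> p) q + bracket p (etaR K \<alpha> \<eta> q)"
      if "in_galpha K \<alpha> \<eta>" for \<eta> p q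
      using that by (rule etaR_bracket)
    show "gactR K \<alpha> g h (bracket p q) \<simeq> bracket (gactR K \<alpha> g h p) (gactR K \<alpha> g h q)"
      if "in_GLalpha K \<alpha> g h" for g h p q
      using that by (intro gactR_bracket) (simp_all add: in_GLalpha_def)
  qed (use bracket_swap quasi_Poisson_jacobi cartan_comp_Adm in
      \<open>simp_all add: bracket_add_left bracket_add_right bracket_mult_left bracket_mult_right
        bracket_Xv_Xv jacobiator_def\<close>)
qed

end
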